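(* Let $n\in\mathbb{N}$, $d\in\mathbb{N}_0$, $c_1,\ldots,c_d\in\mathbb{N}\setminus\{2\}$, and $z_0,\ldots,z_d\in\mathbb{C}$ with $|z_j|<1$. Put $c_0=1$, $c_{d+1}=0$, $\delta_i=\delta(c_i)+\delta(c_{i+1})$, $k_{-1}=0$. Then for every integer $u$ with $0\le u\le d$, $$\sum_{\substack{a_0,\ldots,a_d\geq0\\ a_u\geq1}}t^{\star}_n(\{2\}^{a_0},c_1,\{2\}^{a_1},\ldots,c_d,\{2\}^{a_d})z_0^{2a_0}\cdots z_d^{2a_d} = z_u^2\cdot\frac{n\binom{2n}{n}}{2^{4n-2}}\sum_{n\geq k_0\geq\cdots\geq k_d\geq1}\binom{2n-1}{n-k_0}\frac{1}{(2k_u-1)^2}\prod_{i=0}^{d}\frac{(-1)^{k_i\delta_i}(2k_i-1)^{\delta_i-1}}{(2k_i-1)^2-z_i^2}V_{k_{i-1},k_i}^{\#}(\{1\}^{c_i-3}).$$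
   Context: $t^{\star}_n(\boldsymbol{s})=\sum_{n\geq k_1\geq\cdots\geq k_r\geq1}\prod_{j=1}^r(2k_j-1)^{-s_j}$ for an index $\boldsymbol{s}=(s_1,\ldots,s_r)$, $t^\star_n(\emptyset)=1$. $\{s\}^a$ denotes $s$ repeated $a$ times; for $a\le 0$, $\{1\}^{a}$ is the empty index. $\triangle(k,m)=0$ if $k=m$, $1$ otherwise. For an index $\boldsymbol{s}=(s_1,\ldots,s_r)$ and $k,m\in\mathbb{N}_0$: if $\boldsymbol{s}\ne\emptyset$ and $k\ge m$, $V^{\#}_{k,m}(\boldsymbol{s})=\frac{2k-1}{2m-1}\sum_{k\geq l_1\geq\cdots\geq l_r\geq m}\frac{2^{\triangle(k,l_1)+\triangle(l_1,l_2)+\cdots+\triangle(l_r,m)}}{(2l_1-1)^{s_1}\cdots(2l_r-1)^{s_r}}$; otherwise $V^{\#}_{k,m}(\boldsymbol{s})=\left(2\cdot\frac{2k-1}{2m-1}\right)^{\triangle(k,m)}$. $\delta(0)=2$, $\delta(1)=1$, $\delta(c)=0$ for $c\ge3$. *)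

theory Defs
  imports "HOL-Analysis.Analysis"
begin

fun tstar :: "nat \<Rightarrow> nat list \<Rightarrow> real" where
  "tstar n [] = 1"
| "tstar n (s # ss) = (\<Sum>k\<in>{1..n}. tstar k ss / (2 * real k - 1) ^ s)"

definition tri :: "nat \<Rightarrow> nat \<Rightarrow> nat" where
  "tri k m = (if k = m then 0 else 1)"

fun Vsum :: "nat \<Rightarrow> nat \<Rightarrow> nat list \<Rightarrow> real" where
  "Vsum k m [] = 2 ^ tri k m"
| "Vsum k m (s # ss) = (\<Sum>l\<in>{m..k}. 2 ^ tri k l / (2 * real l - 1) ^ s * Vsum l m ss)"

definition Vsharp :: "nat \<Rightarrow> nat \<Rightarrow> nat list \<Rightarrow> real" where
  "Vsharp k m s = (if s \<noteq> [] \<and> k \<ge> m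
     then (2 * real k - 1) / (2 * real m - 1) * Vsum k m s
     else (2 * ((2 * real k - 1) / (2 * real m - 1))) ^ tri k m)"

text \<open>delta(0)=2, delta(1)=1, delta(c)=0 for c>=3 (value at 2 is irrelevant, set to 0)\<close>
fun delta :: "nat \<Rightarrow> nat" where
  "delta 0 = 2"
| "delta (Suc 0) = 1"
| "delta _ = 0"

definition cext :: "nat \<Rightarrow> (nat \<Rightarrow> nat) \<Rightarrow> nat \<Rightarrow> nat" where
  "cext d c i = (if i = 0 then 1 else if i = Suc d then 0 else c i)"

definition deltas :: "nat \<Rightarrow> (nat \<Rightarrow> nat) \<Rightarrow> nat \<Rightarrow> nat" where
  "deltas d c i = delta (cext d c i) + delta (cext d c (Suc i))"

definition tidx :: "nat \<Rightarrow> (nat \<Rightarrow> nat) \<Rightarrow> nat list \<Rightarrow> nat list" where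
  "tidx d c a = replicate (a ! 0) 2 @ concat (map (\<lambda>i. c i # replicate (a ! i) 2) [1..<Suc d])"

definition chains :: "nat \<Rightarrow> nat \<Rightarrow> nat list set" where
  "chains n d = {ks. length ks = Suc d \<and> ks ! 0 \<le> n \<and> ks ! d \<ge> 1 \<and>
                     (\<forall>i<d. ks ! Suc i \<le> ks ! i)}"

definition kprev :: "nat list \<Rightarrow> nat \<Rightarrow> nat" where
  "kprev ks i = (if i = 0 then 0 else ks ! (i - 1))"

end

(*
  Each block {2}^a of the index makes t* a complete homogeneous sum in the numbers
  1/(2k-1)^2 over a range of k, whose generating function in z^2 is the product
  prod_l (2l-1)^2 / ((2l-1)^2 - z^2).  Expanding these products in partial fractions over the
  distinct poles (2l-1)^2 and exchanging the order of summation turns the generating function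
  into nested sums over chains n >= k_0 >= ... >= k_d >= 1 in which consecutive levels are coupled
  by the kernel sum_m (partial-fraction coefficients) / (2m-1)^c.  For c = 1 and c >= 3 this
  kernel satisfies a three-term recursion in its upper index, which identifies it with central
  binomial coefficients times V#.  The terms with a_u >= 1 are the difference of the generating
  function at z and at z with z_u = 0, which turns the u-th pole factor x/(x - z_u^2) into
  z_u^2/(x - z_u^2).
*)

theory Submission
  imports Defs
begin

section \<open>Partial fractions and rearrangements of sums\<close>

lemma partial_fraction_pair:
  fixes a b w :: "'a::field"
  assumes "a \<noteq> b" "a \<noteq> w" "b \<noteq> w"
  shows "a / (a - w) * (b / (b - w)) = b / (b - a) * (a / (a - w)) + a / (a - b) * (b / (b - w))"
proof -
  have "a - w \<noteq> 0" "b - w \<noteq> 0" "b - a \<noteq> 0" "a - b \<noteq> 0"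
    using assms by auto
  then show ?thesis
    by (simp add: divide_simps) (simp add: algebra_simps)
qed

lemma prod_partial_fractions:
  fixes x :: "'b \<Rightarrow> 'a::field"
  assumes "finite S" "S \<noteq> {}" "inj_on x S" "w \<notin> x ` S"
  shows "(\<Prod>l\<in>S. x l / (x l - w)) =
    (\<Sum>k\<in>S. (\<Prod>l\<in>S - {k}. x l / (x l - x k)) * (x k / (x k - w)))"
  using assms
proof (induction S arbitrary: w rule: finite_ne_induct)
  case (singleton a)
  then show ?case by simp
next
  case (insert a S)
  define c where "c k = (\<Prod>l\<in>S - {k}. x l / (x l - x k))" for k
  have inj: "inj_on x S" and xa: "x a \<notin> x ` S"
    using insert by (auto simp: inj_on_insert)
  have w: "w \<notin> x ` S" "w \<noteq> x a"
    using insert.prems by auto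
  have "(\<Prod>l\<in>insert a S. x l / (x l - w))
      = (\<Prod>l\<in>S. x l / (x l - w)) * (x a / (x a - w))"
    using insert.hyps by (simp add: mult.commute)
  also have "\<dots> = (\<Sum>k\<in>S. c k * (x k / (x k - w) * (x a / (x a - w))))"
    unfolding insert.IH[OF inj w(1)] c_def sum_distrib_right by (simp add: mult.assoc)
  also have "\<dots> = (\<Sum>k\<in>S. c k * (x a / (x a - x k)) * (x k / (x k - w)))
      + (\<Sum>k\<in>S. c k * (x k / (x k - x a))) * (x a / (x a - w))"
  proof -
    have "x k / (x k - w) * (x a / (x a - w)) =
        x a / (x a - x k) * (x k / (x k - w))
            + x k / (x k - x a) * (x a / (x a - w))" if "k \<in> S" for k
    proof -
      have "x k \<noteq> x a" "x k \<noteq> w" using that xa w(1) by (metis image_eqI)+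
      then show ?thesis using w(2) by (intro partial_fraction_pair) auto
    qed
    then have "(\<Sum>k\<in>S. c k * (x k / (x k - w) * (x a / (x a - w)))) =
        (\<Sum>k\<in>S. c k * (x a / (x a - x k)) * (x k / (x k - w))
            + c k * (x k / (x k - x a)) * (x a / (x a - w)))"
      by (intro sum.cong) (simp_all add: distrib_left mult.assoc)
    then show ?thesis
      by (simp only: sum.distrib sum_distrib_right)
  qed
  \<comment> \<open>the induction hypothesis at the pole \<open>w = x a\<close> evaluates the new coefficient\<close>
  also have "(\<Sum>k\<in>S. c k * (x k / (x k - x a)))
      = (\<Prod>l\<in>insert a S - {a}. x l / (x l - x a))"
    using insert.IH[OF inj xa] insert.hyps by (simp add: c_def)
  also have "c k * (x a / (x a - x k))
      = (\<Prod>l\<in>insert a S - {k}. x l / (x l - x k))" if "k \<in> S" for k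
  proof -
    have "insert a S - {k} = insert a (S - {k})" using that insert.hyps by auto
    then show ?thesis using insert.hyps by (simp add: c_def mult.commute)
  qed
  then have "(\<Sum>k\<in>S. c k * (x a / (x a - x k)) * (x k / (x k - w))) =
      (\<Sum>k\<in>S. (\<Prod>l\<in>insert a S - {k}. x l / (x l - x k)) * (x k / (x k - w)))"
    by (intro sum.cong) auto
  finally show ?case
    using insert.hyps by (simp add: add.commute)
qed

lemma sum_triangle_swap:
  "(\<Sum>k\<in>{lo..M}. \<Sum>m\<in>{lo..k}. f k m) = (\<Sum>m\<in>{lo..M::nat}. \<Sum>k\<in>{m..M}. f k m)"
proof -
  have "(\<Sum>k\<in>{lo..M}. \<Sum>m\<in>{lo..k}. f k m)
      = (\<Sum>k\<in>{lo..M}. \<Sum>m\<in>{m \<in> {lo..M}. m \<le> k}. f k m)"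
    by (intro sum.cong) auto
  also have "\<dots> = (\<Sum>m\<in>{lo..M}. \<Sum>k\<in>{k \<in> {lo..M}. m \<le> k}. f k m)"
    by (rule sum.swap_restrict) simp_all
  also have "\<dots> = (\<Sum>m\<in>{lo..M}. \<Sum>k\<in>{m..M}. f k m)"
    by (intro sum.cong) auto
  finally show ?thesis .
qed

lemma sum_nested_triangles:
  fixes A B :: "nat \<Rightarrow> nat \<Rightarrow> 'a::comm_semiring_0"
  shows "(\<Sum>m\<in>{lo..M}. (\<Sum>k\<in>{m..M}. A k m) * (\<Sum>k'\<in>{lo..m}. B m k')) =
    (\<Sum>k\<in>{lo..M}. \<Sum>k'\<in>{lo..k}. \<Sum>m\<in>{k'..k}. A k m * B m k')"
proof -
  have "(\<Sum>m\<in>{lo..M}. (\<Sum>k\<in>{m..M}. A k m) * (\<Sum>k'\<in>{lo..m}. B m k')) =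
      (\<Sum>m\<in>{lo..M}. \<Sum>k\<in>{m..M}. \<Sum>k'\<in>{lo..m}. A k m * B m k')"
    by (simp add: sum_product)
  also have "\<dots> = (\<Sum>k\<in>{lo..M}. \<Sum>m\<in>{lo..k}. \<Sum>k'\<in>{lo..m}. A k m * B m k')"
    by (rule sum_triangle_swap[symmetric])
  also have "\<dots> = (\<Sum>k\<in>{lo..M}. \<Sum>k'\<in>{lo..k}. \<Sum>m\<in>{k'..k}. A k m * B m k')"
    by (intro sum.cong refl sum_triangle_swap)
  finally show ?thesis .
qed

lemma Cauchy_product_geometric_sums:
  fixes a :: "nat \<Rightarrow> 'a::{real_normed_field,banach}"
  assumes "summable (\<lambda>n. norm (a n))" "a sums A" "norm x < 1"
  shows "summable (\<lambda>n. norm (\<Sum>i\<le>n. a i * x ^ (n - i))) \<and>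
    (\<lambda>n. \<Sum>i\<le>n. a i * x ^ (n - i)) sums (A / (1 - x))"
proof
  have geom: "summable (\<lambda>n. norm (x ^ n))"
    using assms(3) by (simp add: norm_power summable_geometric)
  have "(\<lambda>n. \<Sum>i\<le>n. a i * x ^ (n - i)) sums (suminf a * suminf (\<lambda>n. x ^ n))"
    by (rule Cauchy_product_sums[OF assms(1) geom])
  then show "(\<lambda>n. \<Sum>i\<le>n. a i * x ^ (n - i)) sums (A / (1 - x))"
    using sums_unique[OF assms(2)] suminf_geometric[OF assms(3)] by (simp add: divide_inverse)
  have "summable (\<lambda>n. \<Sum>i\<le>n. norm (a i) * norm (x ^ (n - i)))"
    using Cauchy_product_sums[of "\<lambda>n. norm (a n)" "\<lambda>n. norm (x ^ n)"] assms(1) geom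
    by (auto intro: sums_summable)
  then show "summable (\<lambda>n. norm (\<Sum>i\<le>n. a i * x ^ (n - i)))"
    by (rule summable_comparison_test')
      (auto intro: order_trans[OF norm_sum] sum_mono simp: norm_mult)
qed

lemma has_sum_mult_Times:
  fixes f :: "'a \<Rightarrow> complex" and g :: "'b \<Rightarrow> complex"
  assumes f: "(f has_sum F) A" and g: "(g has_sum G) B"
  shows "((\<lambda>(x,y). f x * g y) has_sum (F*G)) (A \<times> B)"
proof -
  have fa: "(\<lambda>x. norm (f x)) summable_on A"
    using has_sum_imp_summable[OF f] summable_on_iff_abs_summable_on_complex by blast
  have ga: "(\<lambda>x. norm (g x)) summable_on B"
    using has_sum_imp_summable[OF g] summable_on_iff_abs_summable_on_complex by blast
  have "(\<lambda>p. norm ((\<lambda>(x,y). f x * g y) p)) summable_on Sigma A (\<lambda>_. B)"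
  proof (subst Infinite_Sum.abs_summable_on_Sigma_iff, intro conjI ballI)
    fix x assume "x \<in> A"
    show "(\<lambda>y. norm ((\<lambda>(x,y). f x * g y) (x, y))) summable_on B"
      using summable_on_cmult_right[OF ga, of "norm (f x)"] by (simp add: norm_mult)
  next
    have e: "(\<Sum>\<^sub>\<infinity>y\<in>B. norm ((\<lambda>(x,y). f x * g y) (x, y)))
        = norm (f x) * (\<Sum>\<^sub>\<infinity>y\<in>B. norm (g y))" for x
      by (simp add: norm_mult infsum_cmult_right')
    show "(\<lambda>x. norm (\<Sum>\<^sub>\<infinity>y\<in>B. norm ((\<lambda>(x,y). f x
        * g y) (x, y)))) summable_on A"
      unfolding e using summable_on_cmult_left[OF fa, of "norm (\<Sum>\<^sub>\<infinity>y\<in>B. norm (g y))"]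
      by (simp add: norm_mult abs_mult)
  qed
  then have s: "(\<lambda>(x,y). f x * g y) summable_on Sigma A (\<lambda>_. B)"
    using summable_on_iff_abs_summable_on_complex by blast
  have "((\<lambda>(x,y). f x * g y) has_sum (F*G)) (Sigma A (\<lambda>_. B))"
  proof (rule has_sum_SigmaI[where g = "\<lambda>x. f x * G"])
    show "((\<lambda>y. (\<lambda>(x,y). f x * g y) (x, y)) has_sum f x * G) B" if "x \<in> A" for x
      using has_sum_cmult_right[OF g, of "f x"] by simp
    show "((\<lambda>x. f x * G) has_sum F * G) A" using has_sum_cmult_left[OF f] .
    show "(\<lambda>(x,y). f x * g y) summable_on Sigma A (\<lambda>_. B)" using s .
  qed
  then show ?thesis by simp
qed

lemma has_sum_sum:
  fixes f :: "'i \<Rightarrow> 'a \<Rightarrow> 'b::topological_comm_monoid_add"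
  assumes "finite S" "\<And>m. m \<in> S \<Longrightarrow> (f m has_sum a m) A"
  shows "((\<lambda>x. \<Sum>m\<in>S. f m x) has_sum (\<Sum>m\<in>S. a m)) A"
  using assms
proof (induction S rule: finite_induct)
  case empty then show ?case by (simp add: has_sum_0)
next
  case (insert m S)
  then show ?case by (simp add: has_sum_add)
qed

section \<open>Products over odd squares\<close>

definition odd_sq :: "nat \<Rightarrow> real" where
  "odd_sq l = (2 * real l - 1) ^ 2"

lemma odd_sq_diff: "odd_sq l - odd_sq k = 4 * (real l - real k) * (real l + real k - 1)"
  unfolding odd_sq_def by (simp add: power2_eq_square algebra_simps)

lemma odd_sq_ge_one: "1 \<le> l \<Longrightarrow> 1 \<le> odd_sq l"
  unfolding odd_sq_def by (simp add: one_le_power)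

lemma odd_sq_inj_on: "inj_on odd_sq {1..}"
proof (rule inj_onI)
  fix l k :: nat
  assume "l \<in> {1..}" "k \<in> {1..}" "odd_sq l = odd_sq k"
  then show "l = k" using odd_sq_diff[of l k] by simp
qed

lemma odd_sq_neq_small:
  assumes "1 \<le> l" "norm w < 1"
  shows "w \<noteq> complex_of_real (odd_sq l)"
proof
  assume "w = complex_of_real (odd_sq l)"
  then have "norm w = odd_sq l" using odd_sq_ge_one[OF assms(1)] by simp
  then show False using odd_sq_ge_one[OF assms(1)] assms(2) by simp
qed

lemma small_notin_odd_sq_image:
  assumes "1 \<le> lo" "norm (w::complex) < 1"
  shows "w \<notin> of_real ` odd_sq ` {lo..hi}"
proof
  assume "w \<in> of_real ` odd_sq ` {lo..hi}"
  then obtain l where "l \<in> {lo..hi}" "w = of_real (odd_sq l)" by auto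
  then show False using odd_sq_neq_small[of l w] assms by auto
qed

(* coeff_above hi k * coeff_below lo k is the coefficient of x_k / (x_k - w), x_k = odd_sq k,
   in the partial-fraction expansion of block_prod w lo hi (block_prod_partial_fractions). *)
definition coeff_above :: "nat \<Rightarrow> nat \<Rightarrow> real" where
  "coeff_above M k = (\<Prod>l\<in>{k<..M}. odd_sq l / (odd_sq l - odd_sq k))"

definition coeff_below :: "nat \<Rightarrow> nat \<Rightarrow> real" where
  "coeff_below m k = (\<Prod>l\<in>{m..<k}. odd_sq l / (odd_sq l - odd_sq k))"

definition block_prod :: "complex \<Rightarrow> nat \<Rightarrow> nat \<Rightarrow> complex" where
  "block_prod w lo hi = (\<Prod>l\<in>{lo..hi}. of_real (odd_sq l) / (of_real (odd_sq l) - w))"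

lemma coeff_above_refl [simp]: "coeff_above k k = 1"
  by (simp add: coeff_above_def)

lemma coeff_below_refl [simp]: "coeff_below k k = 1"
  by (simp add: coeff_below_def)

lemma coeff_above_Suc:
  "k \<le> M \<Longrightarrow> coeff_above (Suc M) k
      = coeff_above M k * (odd_sq (Suc M) / (odd_sq (Suc M) - odd_sq k))"
proof -
  assume "k \<le> M"
  then have "{k<..Suc M} = insert (Suc M) {k<..M}" by auto
  then show ?thesis unfolding coeff_above_def by (simp add: mult.commute)
qed

lemma coeff_below_Suc_left:
  "m < k \<Longrightarrow> coeff_below m k
      = odd_sq m / (odd_sq m - odd_sq k) * coeff_below (Suc m) k"
  unfolding coeff_below_def by (simp add: prod.atLeast_Suc_lessThan)

lemma coeff_below_ratio_step:
  fixes a b :: real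
  assumes "a - b - 1 \<noteq> 0" "a + b \<noteq> 0" "a - b \<noteq> 0" "a + b - 1 \<noteq> 0" "b \<noteq> 0"
  shows "- (2*b - 1) * ((1 + a) + b - 1) / (8*b*(b + 1 - (1 + a))) / (4 * (a - b - 1) * (a + b)) =
    - (2*b - 1) * (a + b - 1) / (8*b*(b + 1 - a)) / (4 * (a - b) * (a + b - 1))"
proof -
  have e: "b + 1 - (1 + a) = - (a - b)" "b + 1 - a = - (a - b - 1)" "(1 + a) + b - 1 = a + b"
    by simp_all
  have nz: "8*b*(- (a - b))*(4*(a - b - 1)*(a + b)) \<noteq> 0"
    "8*b*(- (a - b - 1))*(4*(a - b)*(a + b - 1)) \<noteq> 0"
    using assms by simp_all
  show ?thesis
    unfolding e divide_divide_eq_left frac_eq_eq[OF nz] by algebra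
qed

lemma coeff_below_Suc_right:
  assumes "1 \<le> m" "m \<le> L"
  shows "coeff_below m (Suc L) =
    coeff_below m L * (- (2*real L - 1) * (real m + real L - 1) / (8*real L*(real L + 1 - real m)))"
  using assms(2)
proof (induction m rule: inc_induct)
  case base
  have "odd_sq L - odd_sq (Suc L) = - 8 * real L"
    by (simp add: odd_sq_diff algebra_simps)
  then show ?case
    using assms by (simp add: coeff_below_Suc_left odd_sq_def power2_eq_square field_simps)
next
  case (step n)
  have n: "1 \<le> n" "n < L" using step.hyps assms by auto
  define ratio where "ratio m = - (2*real L - 1) * (real m + real L - 1) / (8*real L*(real L + 1 - real m))"
    for m :: nat
  have step_ratio: "ratio (Suc n) / (4 * (real n - real L - 1) * (real n + real L)) =
      ratio n / (4 * (real n - real L) * (real n + real L - 1))"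
    unfolding ratio_def of_nat_Suc using n by (intro coeff_below_ratio_step) auto
  have "odd_sq n - odd_sq (Suc L) = 4 * (real n - real L - 1) * (real n + real L)"
    "odd_sq n - odd_sq L = 4 * (real n - real L) * (real n + real L - 1)"
    by (simp_all add: odd_sq_diff)
  moreover have "coeff_below (Suc n) (Suc L) = coeff_below (Suc n) L * ratio (Suc n)"
    using step.IH unfolding ratio_def .
  ultimately have "coeff_below n (Suc L) = odd_sq n * coeff_below (Suc n) L *
      (ratio (Suc n) / (4 * (real n - real L - 1) * (real n + real L)))"
    using n by (simp add: coeff_below_Suc_left)
  also have "\<dots> = odd_sq n / (odd_sq n - odd_sq L) * coeff_below (Suc n) L * ratio n"
    unfolding step_ratio \<open>odd_sq n - odd_sq L = _\<close> by simp
  also have "\<dots> = coeff_below n L * ratio n"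
    using n by (simp add: coeff_below_Suc_left)
  finally show ?case unfolding ratio_def .
qed

lemma block_prod_Suc:
  "lo \<le> Suc hi \<Longrightarrow>
    block_prod w lo (Suc hi)
        = block_prod w lo hi * (of_real (odd_sq (Suc hi)) / (of_real (odd_sq (Suc hi)) - w))"
  unfolding block_prod_def by (simp add: prod.nat_ivl_Suc' mult.commute)

lemma block_prod_partial_fractions:
  assumes "1 \<le> lo" "lo \<le> hi" "w \<notin> of_real ` odd_sq ` {lo..hi}"
  shows "block_prod w lo hi =
    (\<Sum>k\<in>{lo..hi}. of_real (coeff_above hi k * coeff_below lo k) *
       (of_real (odd_sq k) / (of_real (odd_sq k) - w)))"
proof -
  let ?x = "\<lambda>l. complex_of_real (odd_sq l)"
  have inj: "inj_on ?x {lo..hi}"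
    using inj_on_subset[OF odd_sq_inj_on, of "{lo..hi}"] assms(1)
    by (auto simp: inj_on_def)
  have coeff: "(\<Prod>l\<in>{lo..hi} - {k}. ?x l / (?x l - ?x k))
      = of_real (coeff_above hi k * coeff_below lo k)"
    if "k \<in> {lo..hi}" for k
  proof -
    have "{lo..hi} - {k} = {k<..hi} \<union> {lo..<k}" "{k<..hi} \<inter> {lo..<k} = {}"
      using that by auto
    then show ?thesis
      by (simp add: prod.union_disjoint coeff_above_def coeff_below_def)
  qed
  have ne: "{lo..hi} \<noteq> {}" and w: "w \<notin> ?x ` {lo..hi}"
    using assms(2,3) by (auto simp: image_image)
  have "block_prod w lo hi
      = (\<Sum>k\<in>{lo..hi}. (\<Prod>l\<in>{lo..hi} - {k}. ?x l / (?x l - ?x k))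
      * (?x k / (?x k - w)))"
    unfolding block_prod_def by (rule prod_partial_fractions[OF finite_atLeastAtMost ne inj w])
  also have "\<dots>
      = (\<Sum>k\<in>{lo..hi}. of_real (coeff_above hi k * coeff_below lo k) * (?x k / (?x k - w)))"
    by (intro sum.cong) (simp_all add: coeff)
  finally show ?thesis .
qed

section \<open>The convolution kernel\<close>

definition central_coeff :: "nat \<Rightarrow> real" where
  "central_coeff K = real K * real (2*K choose K) / 2^(4*K-2)"

lemma central_coeff_fact: "central_coeff K = real K * fact (2*K) / (fact K * fact K) / 2^(4*K-2)"
  unfolding central_coeff_def by (simp add: binomial_fact)

lemma central_coeff_Suc:
  assumes "1 \<le> K"
  shows "central_coeff (Suc K) = central_coeff K * (2*real K + 1) / (8 * real K)"
proof -
  have e: "4 * Suc K - 2 = (4*K - 2) + 4" using assms by simp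
  define a where "a = (fact K :: real)"
  define b where "b = (fact (2*K) :: real)"
  define p where "p = (2::real)^(4*K-2)"
  define sK where "sK = real K + 1"
  have f1: "fact (2 * Suc K) = (2 * sK) * (2*real K + 1) * b"
    unfolding b_def sK_def by (simp add: fact_Suc algebra_simps)
  have f2: "fact (Suc K) = sK * a" unfolding a_def sK_def by (simp add: fact_Suc)
  have f3: "real (Suc K) = sK" unfolding sK_def by simp
  have pp: "(2::real)^(4*K-2+4) = p * 16" unfolding p_def by (simp add: power_add)
  have pos: "a > 0" "p > 0" "real K > 0" "sK > 0" using assms unfolding a_def p_def sK_def by auto
  have "central_coeff (Suc K)
      = sK * ((2 * sK) * (2*real K + 1) * b) / ((sK * a) * (sK * a)) / (p * 16)"
    unfolding central_coeff_fact e f1 f2 f3 pp by simp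
  also have "\<dots> = real K * b / (a * a) / p * (2*real K + 1) / (8 * real K)"
    using pos by (simp add: field_simps)
  also have "\<dots> = central_coeff K * (2*real K + 1) / (8 * real K)"
    unfolding central_coeff_fact a_def b_def p_def by simp
  finally show ?thesis .
qed

lemma central_coeff_pos: "1 \<le> K \<Longrightarrow> central_coeff K > 0"
  unfolding central_coeff_def by simp

lemma binomial_Suc_Suc_ratio:
  "real (Suc (Suc N) choose Suc J) * (real (Suc J) * real (Suc N - J)) =
        real (N choose J) * (real (Suc (Suc N)) * real (Suc N))"
proof -
  have h1: "Suc J * (Suc (Suc N) choose Suc J) = Suc (Suc N) * (Suc N choose J)"
    by (rule Suc_times_binomial)
  have h2: "(Suc N - J) * (Suc N choose J) = Suc N * (N choose J)"
    using binomial_absorb_comp[of "Suc N" J] by simp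
  have "real (Suc J) * real (Suc (Suc N) choose Suc J) = real (Suc (Suc N)) * real (Suc N choose J)"
    using h1 by (metis of_nat_mult)
  moreover have "real (Suc N - J) * real (Suc N choose J) = real (Suc N) * real (N choose J)"
    using h2 by (metis of_nat_mult)
  ultimately show ?thesis by (metis mult.assoc mult.commute)
qed

lemma coeff_above_binomial:
  assumes "1 \<le> k" "k \<le> n"
  shows "coeff_above n k = real ((2*n-1) choose (n-k)) * central_coeff n / central_coeff k"
  using assms(2)
proof (induction n rule: dec_induct)
  case base
  then show ?case using central_coeff_pos[OF assms(1)] by simp
next
  case (step n)
  have n1: "1 \<le> n" using step.hyps assms by simp
  have Nk: "central_coeff k > 0" using central_coeff_pos[OF assms(1)] .
  define N where "N = 2*n-1"
  define J where "J = n-k"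
  have c1: "(2*Suc n - 1) choose (Suc n - k) = Suc (Suc N) choose Suc J"
  proof -
    have "2*Suc n - 1 = Suc (Suc N)" "Suc n - k = Suc J"
      using n1 step.hyps unfolding N_def J_def by auto
    then show ?thesis by metis
  qed
  define u where "u = real n + 1 - real k"
  define v where "v = real n + real k"
  have e2: "real (Suc J) = u" "real (Suc N - J) = v"
    "real (Suc (Suc N)) = 2*real n + 1" "real (Suc N) = 2 * real n" using assms step.hyps n1
    unfolding N_def J_def u_def v_def by (auto simp: of_nat_diff)
  have nz: "u \<noteq> 0" "v \<noteq> 0" "real n \<noteq> 0" unfolding u_def v_def
    using step.hyps n1 by auto
  have xd: "odd_sq (Suc n) - odd_sq k = 4 * u * v"
    unfolding odd_sq_diff u_def v_def by (simp add: algebra_simps)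
  have xs: "odd_sq (Suc n) = (2 * real n + 1)^2" unfolding odd_sq_def by (simp add: algebra_simps)
  define C where "C = real ((2*n-1) choose (n-k))"
  have r: "real ((2*Suc n - 1) choose (Suc n - k)) = C * ((2*real n + 1) * (2 * real n)) / (u * v)"
    unfolding c1 C_def N_def[symmetric] J_def[symmetric]
    using binomial_Suc_Suc_ratio[of N J] nz unfolding e2 by (simp add: field_simps)
  have "coeff_above (Suc n) k
      = C * central_coeff n / central_coeff k * (odd_sq (Suc n) / (odd_sq (Suc n) - odd_sq k))"
    using coeff_above_Suc[OF step.hyps(1)] step.IH unfolding C_def by simp
  also have "\<dots>
      = real ((2*Suc n - 1) choose (Suc n - k)) * central_coeff (Suc n) / central_coeff k"
    unfolding r central_coeff_Suc[OF n1] xd unfolding xs using nz Nk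
    by (simp add: field_simps power2_eq_square)
  finally show ?case .
qed

lemma coeff_below_one:
  "1 \<le> K \<Longrightarrow> coeff_below 1 K = central_coeff K * (-2) * (-1)^K / (2*real K - 1)"
proof (induction K rule: dec_induct)
  case base
  then show ?case by (simp add: central_coeff_def)
next
  case (step L)
  have L1: "1 \<le> L" using step.hyps by simp
  have "coeff_below 1 (Suc L) = coeff_below 1 L * (- (2*real L - 1) / (8*real L))"
    using coeff_below_Suc_right[of 1 L] L1 by simp
  also have "\<dots> = central_coeff (Suc L) * (-2) * (-1)^(Suc L) / (2*real (Suc L) - 1)"
  proof -
    define pL where "pL = 2*real L + 1"
    define mL where "mL = 2*real L - 1"
    define l where "l = real L"
    have nz: "pL \<noteq> 0" "mL \<noteq> 0" "l \<noteq> 0" unfolding pL_def mL_def l_def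
      using L1 by auto
    have cc_Suc: "central_coeff (Suc L) = central_coeff L * pL / (8*l)" unfolding pL_def l_def
      using central_coeff_Suc[OF L1] by simp
    have pS: "2*real (Suc L) - 1 = pL" unfolding pL_def by simp
    have "central_coeff L * (-2) * (-1)^L / mL * (- mL/(8*l))
        = (central_coeff L * pL/(8*l)) * (-2)*(-1)^Suc L / pL"
      using nz by (simp add: field_simps)
    then show ?thesis unfolding step.IH cc_Suc pS unfolding mL_def l_def by simp
  qed
  finally show ?case .
qed

definition conv_kernel :: "nat \<Rightarrow> nat \<Rightarrow> nat \<Rightarrow> real" where
  "conv_kernel c K k = (\<Sum>m\<in>{k..K}. coeff_below m K * coeff_above m k / (2*real m - 1)^c)"

lemma conv_kernel_diag: "conv_kernel c k k = 1 / (2*real k - 1)^c"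
  unfolding conv_kernel_def by simp

lemma kernel_two_step_identity: fixes m K k :: real
  assumes "m - K \<noteq> 0" "m+K-1 \<noteq> 0" "m+1-k \<noteq> 0" "m+k \<noteq> 0" "K-k \<noteq> 0" "K+k-1 \<noteq> 0"
  shows "((K - m)*(m+K-1)/((K-k)*(K+k-1))) / (4*(m-K)*(m+K-1)) + 1/(4*(m+1-k)*(m+k))
       = ((K - (m+1))*((m+1)+K-1)/((K-k)*(K+k-1))) / (4*(m+1-k)*(m+k))"
proof -
  define D where "D = (K-k)*(K+k-1)"
  define A where "A = m - K"
  define B where "B = m+K-1"
  define P where "P = m+1-k"
  define Q where "Q = m+k"
  have nz: "D \<noteq> 0" "A \<noteq> 0" "B \<noteq> 0" "P \<noteq> 0" "Q \<noteq> 0"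
    using assms unfolding D_def A_def B_def P_def Q_def by auto
  have e1: "K - m = - A" unfolding A_def by simp
  have e2: "(K - (m+1))*((m+1)+K-1) = D - P*Q"
    unfolding D_def P_def Q_def by (simp add: algebra_simps)
  have "(-A*B/D) / (4*A*B) + 1/(4*P*Q) = ((D - P*Q)/D) / (4*P*Q)"
    using nz by (simp add: field_simps)
  then show ?thesis unfolding e1 e2 D_def[symmetric] A_def[symmetric] B_def[symmetric] P_def[symmetric] Q_def[symmetric]
    by simp
qed

lemma conv_kernel_two_partial_sum:
  assumes "1 \<le> k" "k < K" "k \<le> h" "h \<le> K"
  shows "(\<Sum>j\<in>{k..h}. coeff_below j K * coeff_above j k / odd_sq j) =
    coeff_below h K * coeff_above h k / odd_sq h *
      ((real K - real h) * (real h + real K - 1) / ((real K - real k) * (real K + real k - 1)))"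
  using assms(3,4)
proof (induction h rule: dec_induct)
  case base
  have "(real K - real k) * (real k + real K - 1) \<noteq> 0" using assms by auto
  then show ?case by (simp add: algebra_simps)
next
  case (step m)
  define T where "T j = coeff_below j K * coeff_above j k / odd_sq j" for j
  define R where "R j = (real K - real j) * (real j + real K - 1) / ((real K - real k) * (real K + real k - 1))"
    for j :: nat
  define GF where "GF = coeff_below (Suc m) K * coeff_above m k"
  define D1 where "D1 = 4 * (real m - real K) * (real m + real K - 1)"
  define D2 where "D2 = 4 * (real m + 1 - real k) * (real m + real k)"
  have m: "1 \<le> m" "Suc m \<le> K" using step assms by auto
  have "coeff_below m K = odd_sq m / (odd_sq m - odd_sq K) * coeff_below (Suc m) K"
    using m by (simp add: coeff_below_Suc_left)
  moreover have "odd_sq m - odd_sq K = D1"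
    by (simp add: D1_def odd_sq_diff)
  moreover have "odd_sq m \<noteq> 0" using odd_sq_ge_one[OF m(1)] by simp
  ultimately have T_m: "T m = GF / D1"
    by (simp add: T_def GF_def)
  have "coeff_above (Suc m) k = coeff_above m k * (odd_sq (Suc m) / (odd_sq (Suc m) - odd_sq k))"
    using step.hyps(1) by (rule coeff_above_Suc)
  moreover have "odd_sq (Suc m) - odd_sq k = D2"
    by (simp add: D2_def odd_sq_diff algebra_simps)
  moreover have "odd_sq (Suc m) \<noteq> 0" using odd_sq_ge_one[of "Suc m"] by simp
  ultimately have T_Suc: "T (Suc m) = GF / D2"
    by (simp add: T_def GF_def)
  have "real m - real K \<noteq> 0" "real m + real K - 1 \<noteq> 0" "real m + 1 - real k \<noteq> 0"
    "real m + real k \<noteq> 0" "real K - real k \<noteq> 0" "real K + real k - 1 \<noteq> 0"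
    using m step.hyps assms by auto
  from kernel_two_step_identity[OF this]
  have R_step: "R m / D1 + 1 / D2 = R (Suc m) / D2"
    by (simp add: R_def D1_def D2_def algebra_simps)
  have "T m * R m + T (Suc m) = GF * (R m / D1 + 1 / D2)"
    unfolding T_m T_Suc by (simp add: ring_distribs)
  also have "\<dots> = T (Suc m) * R (Suc m)"
    unfolding R_step T_Suc by simp
  finally have "T m * R m + T (Suc m) = T (Suc m) * R (Suc m)" .
  then show ?case
    using step.IH m step.hyps by (simp add: sum.nat_ivl_Suc' T_def R_def)
qed

lemma conv_kernel_two_off_diag: assumes "1 \<le> k" "k < K" shows "conv_kernel 2 K k = 0"
proof -
  have "conv_kernel 2 K k = (\<Sum>j\<in>{k..K}. coeff_below j K * coeff_above j k / odd_sq j)"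
    unfolding conv_kernel_def odd_sq_def ..
  also have "\<dots> = 0" using conv_kernel_two_partial_sum[OF assms _ order_refl] assms by simp
  finally show ?thesis .
qed

lemma kernel_rec_step_identity:
  fixes a b q r0 t l :: real
  assumes "r0 \<noteq> 0" "t \<noteq> 0" "l \<noteq> 0" "- b*q + a * r0 + q * t + r0 * t = 0"
  shows "b^2 * (- a * q / (8*l*r0)) / t + a^2*b/(8*l) / t = b * (- a * q / (8*l*r0)) - a*b/(8*l)"
proof -
  have "b^2 * (- a * q / (8*l*r0)) / t + a^2*b/(8*l) / t - (b * (- a * q / (8*l*r0)) - a*b/(8*l))
      = a*b/(8*l*r0*t) * (- b*q + a * r0 + q * t + r0 * t)"
    using assms(1-3) by (simp add: field_simps power2_eq_square)
  then show ?thesis using assms(4) by simp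
qed

(* The recursion in the upper index comes from the ratio in coeff_below_Suc_right. *)
lemma conv_kernel_rec_term:
  fixes A :: real
  assumes "1 \<le> m" "m \<le> L"
    and \<rho>: "\<rho> = - (2*real L - 1) * (real m + real L - 1) / (8*real L*(real L + 1 - real m))"
  shows "(2*real L + 1)^2 * (A * \<rho> / (2*real m - 1) ^ Suc c)
      + (2*real L - 1)^2 * (2*real L + 1) / (8*real L) * (A / (2*real m - 1) ^ Suc c)
    = (2*real L + 1) * (A * \<rho> / (2*real m - 1) ^ c)
      - (2*real L - 1) * (2*real L + 1) / (8*real L) * (A / (2*real m - 1) ^ c)"
proof -
  define t where "t = 2*real m - 1"
  have t: "t \<noteq> 0" using assms(1) by (simp add: t_def)
  have r0: "real L + 1 - real m \<noteq> 0" and l0: "real L \<noteq> 0" using assms by auto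
  have "- (2*real L + 1) * (real m + real L - 1) + (2*real L - 1) * (real L + 1 - real m)
      + (real m + real L - 1) * t + (real L + 1 - real m) * t = 0"
    by (simp add: t_def algebra_simps)
  then have identity: "(2*real L + 1)^2 * \<rho> / t + (2*real L - 1)^2 * (2*real L + 1) / (8*real L) / t
      = (2*real L + 1) * \<rho> - (2*real L - 1) * (2*real L + 1) / (8*real L)"
    unfolding \<rho> by (rule kernel_rec_step_identity[OF r0 t l0])
  have "(2*real L + 1)^2 * (A * \<rho> / t ^ Suc c)
      + (2*real L - 1)^2 * (2*real L + 1) / (8*real L) * (A / t ^ Suc c)
    = A / t ^ c * ((2*real L + 1)^2 * \<rho> / t + (2*real L - 1)^2 * (2*real L + 1) / (8*real L) / t)"
    using t l0 by (simp add: field_simps)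
  also have "\<dots> = A / t ^ c * ((2*real L + 1) * \<rho> - (2*real L - 1) * (2*real L + 1) / (8*real L))"
    unfolding identity ..
  also have "\<dots> = (2*real L + 1) * (A * \<rho> / t ^ c) - (2*real L - 1) * (2*real L + 1) / (8*real L) * (A / t ^ c)"
    by (simp add: algebra_simps)
  finally show ?thesis unfolding t_def .
qed

lemma conv_kernel_rec:
  assumes "1 \<le> k" "k \<le> L"
  shows "(2*real L + 1)^2 * conv_kernel (Suc c) (Suc L) k
      + (2*real L - 1)^2 * (2*real L + 1) / (8*real L) * conv_kernel (Suc c) L k
    = (2*real L + 1) * conv_kernel c (Suc L) k
      - (2*real L - 1) * (2*real L + 1) / (8*real L) * conv_kernel c L k"
proof -
  define \<rho> where "\<rho> m = - (2*real L - 1) * (real m + real L - 1) / (8*real L*(real L + 1 - real m))"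
    for m
  define A where "A m = coeff_below m L * coeff_above m k" for m
  have upper: "conv_kernel c' (Suc L) k =
      (\<Sum>m\<in>{k..L}. A m * \<rho> m / (2*real m - 1) ^ c') + coeff_above (Suc L) k / (2*real L + 1) ^ c'"
    for c'
  proof -
    have "coeff_below m (Suc L) * coeff_above m k = A m * \<rho> m" if "m \<in> {k..L}" for m
      using that assms coeff_below_Suc_right[of m L] by (simp add: A_def \<rho>_def mult_ac)
    then show ?thesis
      unfolding conv_kernel_def using assms
      by (simp add: sum.nat_ivl_Suc' add.commute)
  qed
  have lower: "conv_kernel c' L k = (\<Sum>m\<in>{k..L}. A m / (2*real m - 1) ^ c')" for c'
    unfolding conv_kernel_def A_def by simp
  have "(2*real L + 1)^2 * (\<Sum>m\<in>{k..L}. A m * \<rho> m / (2*real m - 1) ^ Suc c)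
      + (2*real L - 1)^2 * (2*real L + 1) / (8*real L) * (\<Sum>m\<in>{k..L}. A m / (2*real m - 1) ^ Suc c)
    = (2*real L + 1) * (\<Sum>m\<in>{k..L}. A m * \<rho> m / (2*real m - 1) ^ c)
      - (2*real L - 1) * (2*real L + 1) / (8*real L) * (\<Sum>m\<in>{k..L}. A m / (2*real m - 1) ^ c)"
    unfolding sum_distrib_left sum.distrib[symmetric] sum_subtractf[symmetric]
    using assms by (intro sum.cong refl conv_kernel_rec_term) (auto simp: \<rho>_def)
  moreover have "(2*real L + 1)^2 * (coeff_above (Suc L) k / (2*real L + 1) ^ Suc c)
      = (2*real L + 1) * (coeff_above (Suc L) k / (2*real L + 1) ^ c)"
    by (simp add: power2_eq_square add_pos_nonneg)
  ultimately show ?thesis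
    unfolding upper lower distrib_left by linarith
qed

lemma conv_kernel_two:
  "1 \<le> k \<Longrightarrow> k \<le> L \<Longrightarrow> conv_kernel 2 L k = (if L = k then 1/(2*real k - 1)^2 else 0)"
  using conv_kernel_two_off_diag[of k L] conv_kernel_diag[of 2 k] by auto

lemma conv_kernel_one:
  assumes "1 \<le> k" "k \<le> K"
  shows "conv_kernel 1 K k = central_coeff K / central_coeff k * 2^tri K k / (2*real K - 1)"
  using assms(2)
proof (induction K rule: dec_induct)
  case base
  then show ?case using central_coeff_pos[OF assms(1)] by (simp add: conv_kernel_diag tri_def)
next
  case (step L)
  have L1: "1 \<le> L" using step.hyps assms by simp
  define pL where "pL = 2*real L + 1"
  define mL where "mL = 2*real L - 1"
  define l where "l = real L"
  define nL where "nL = central_coeff L"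
  define nk where "nk = central_coeff k"
  have nz: "pL \<noteq> 0" "mL \<noteq> 0" "l \<noteq> 0" "nk \<noteq> 0" "nL \<noteq> 0"
    unfolding pL_def mL_def l_def nk_def nL_def using L1 central_coeff_pos[OF assms(1)] central_coeff_pos[OF L1] by auto
  have R: "pL^2 * conv_kernel 2 (Suc L) k + mL^2*pL/(8*l) * conv_kernel 2 L k
      = pL * conv_kernel 1 (Suc L) k - mL*pL/(8*l) * conv_kernel 1 L k"
    using conv_kernel_rec[OF assms(1) step.hyps(1), of 1] unfolding pL_def mL_def l_def by (simp add: numeral_2_eq_2)
  have z: "conv_kernel 2 (Suc L) k = 0"
    using conv_kernel_two_off_diag[of k "Suc L"] assms step.hyps by simp
  have IH: "conv_kernel 1 L k = nL / nk * 2^tri L k / mL"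
    using step.IH unfolding nL_def nk_def mL_def .
  have cc_Suc: "central_coeff (Suc L) = nL * pL / (8*l)" unfolding nL_def pL_def l_def
    using central_coeff_Suc[OF L1] by simp
  have tS: "tri (Suc L) k = 1" using step.hyps unfolding tri_def by simp
  have pS: "2*real (Suc L) - 1 = pL" unfolding pL_def by simp
  have P1: "conv_kernel 1 (Suc L) k = (mL^2 * conv_kernel 2 L k + mL * conv_kernel 1 L k)/(8*l)"
  proof -
    have E: "pL * conv_kernel 1 (Suc L) k
        = pL * ((mL^2 * conv_kernel 2 L k + mL * conv_kernel 1 L k)/(8*l))"
      using R z nz by (simp add: field_simps)
    show ?thesis using E mult_left_cancel[OF nz(1)] by blast
  qed
  show ?case
  proof (cases "L = k")
    case True
    then have "conv_kernel 2 L k = 1 / mL^2" "tri L k = 0" "nL = nk"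
      unfolding mL_def tri_def nL_def nk_def
      using conv_kernel_two[OF assms(1), of L] by auto
    then show ?thesis unfolding P1 IH cc_Suc tS pS nk_def[symmetric] using nz
      by (simp add: field_simps power2_eq_square)
  next
    case False
    then have "conv_kernel 2 L k = 0" "tri L k = 1" unfolding tri_def
      using conv_kernel_two[OF assms(1), of L] step.hyps by auto
    then show ?thesis unfolding P1 IH cc_Suc tS pS nk_def[symmetric] using nz
      by (simp add: field_simps power2_eq_square)
  qed
qed

lemma Vsharp_Nil: "Vsharp K k [] = (2*((2*real K - 1)/(2*real k - 1)))^tri K k"
  unfolding Vsharp_def by simp

lemma Vsharp_ones:
  "1 \<le> r \<Longrightarrow> k \<le> K \<Longrightarrow>
    Vsharp K k (replicate r 1) = (2*real K - 1)/(2*real k - 1) * Vsum K k (replicate r 1)"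
  unfolding Vsharp_def by simp

lemma Vsum_ones_diag: "Vsum k k (replicate r 1) = 1/(2*real k - 1)^r"
  by (induction r) (simp_all add: tri_def)

lemma Vsharp_ones_diag: "Vsharp k k (replicate r 1) = 1/(2*real k - 1)^r"
proof (cases "r = 0")
  case True then show ?thesis by (simp add: Vsharp_Nil tri_def)
next
  case False
  then have "1 \<le> r" by simp
  then show ?thesis unfolding Vsharp_ones[OF \<open>1 \<le> r\<close> le_refl] Vsum_ones_diag
    by (cases "2*real k - 1 = 0") auto
qed

lemma Vsharp_ones_div:
  assumes "1 \<le> k" "k \<le> l"
  shows "Vsharp l k (replicate r 1) / (2*real l - 1) = Vsum l k (replicate r 1) / (2*real k - 1)"
proof (cases "r = 0")
  case True
  have l0: "2*real l - 1 \<noteq> 0" using assms by simp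
  show ?thesis
  proof (cases "l = k")
    case True then show ?thesis using \<open>r = 0\<close> by (simp add: Vsharp_Nil tri_def)
  next
    case False
    have k0: "2*real k - 1 \<noteq> 0" using assms by simp
    define a where "a = 2*real l - 1"
    define c where "c = 2*real k - 1"
    have A: "Vsharp l k [] = 2 * (a/c)" unfolding a_def c_def
      using False by (simp add: Vsharp_Nil tri_def)
    have B: "Vsum l k [] = 2" using False by (simp add: tri_def)
    have "2 * (a/c) / a = 2 / c"
      using l0 k0 unfolding a_def c_def[symmetric] by (simp add: field_simps)
    then show ?thesis unfolding \<open>r = 0\<close> replicate_0 A B a_def[symmetric] c_def[symmetric] by simp
  qed
next
  case False
  then have "1 \<le> r" by simp
  have l0: "2*real l - 1 \<noteq> 0" using assms by simp
  show ?thesis unfolding Vsharp_ones[OF \<open>1 \<le> r\<close> assms(2)] using l0 by simp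
qed

lemma sum_tri_weight_diff:
  assumes "k \<le> L"
  shows "(\<Sum>l\<in>{k..Suc L}. 2^tri (Suc L) l * b l) - (\<Sum>l\<in>{k..L}. 2^tri L l * b l)
      = b (Suc L) + (b L :: real)"
proof -
  have a: "(\<Sum>l\<in>{k..Suc L}. 2^tri (Suc L) l * b l)
      = (\<Sum>l\<in>{k..L}. 2 * b l) + b (Suc L)"
    using assms by (simp add: sum.nat_ivl_Suc' tri_def)
  have "(\<Sum>l\<in>{k..L}. 2 * b l) - (\<Sum>l\<in>{k..L}. 2^tri L l * b l)
      = (\<Sum>l\<in>{k..L}. (if l = L then b l else 0))"
    unfolding sum_subtractf[symmetric] by (rule sum.cong) (auto simp: tri_def)
  also have "\<dots> = b L" using assms by (simp add: sum.delta')
  finally show ?thesis unfolding a by simp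
qed

lemma Vsharp_ones_rec:
  assumes "1 \<le> k" "k \<le> L"
  shows "Vsharp (Suc L) k (replicate (Suc r) 1) / (2*real L + 1)
      - Vsharp L k (replicate (Suc r) 1) / (2*real L - 1)
       = Vsharp (Suc L) k (replicate r 1) / (2*real L + 1)^2
           + Vsharp L k (replicate r 1) / (2*real L - 1)^2"
proof -
  define b where "b l = Vsum l k (replicate r 1) / (2*real l - 1)" for l
  have k0: "2*real k - 1 \<noteq> 0" using assms by simp
  have e1: "Vsharp (Suc L) k (replicate (Suc r) 1) / (2*real L + 1)
      = Vsum (Suc L) k (replicate (Suc r) 1) / (2*real k - 1)"
    using Vsharp_ones_div[OF assms(1), of "Suc L" "Suc r"] assms by (simp add: algebra_simps)
  have e2: "Vsharp L k (replicate (Suc r) 1) / (2*real L - 1)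
      = Vsum L k (replicate (Suc r) 1) / (2*real k - 1)"
    using Vsharp_ones_div[OF assms(1) assms(2), of "Suc r"] by simp
  have e3: "Vsharp l k (replicate r 1) / (2*real l - 1)^2
      = b l / (2*real k - 1)" if "k \<le> l" for l
  proof -
    define a where "a = 2*real l - 1"
    define c where "c = 2*real k - 1"
    define X where "X = Vsharp l k (replicate r 1)"
    define Y where "Y = Vsum l k (replicate r 1)"
    have v: "X/a = Y/c"
      using Vsharp_ones_div[OF assms(1) that, of r] unfolding a_def c_def X_def Y_def .
    have "X/a^2 = (X/a)/a" by (simp add: power2_eq_square)
    also have "\<dots> = (Y/c)/a" using v by simp
    also have "\<dots> = (Y/a)/c" by (simp add: divide_divide_eq_left mult.commute)
    finally show ?thesis unfolding b_def a_def c_def X_def Y_def .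
  qed
  have e4: "Vsum K k (replicate (Suc r) 1) = (\<Sum>l\<in>{k..K}. 2^tri K l * b l)" for K
    unfolding b_def by simp
  define VS where "VS = Vsum (Suc L) k (replicate (Suc r) 1)"
  define VL where "VL = Vsum L k (replicate (Suc r) 1)"
  define c where "c = 2*real k - 1"
  have d: "VS - VL = b (Suc L) + b L"
    unfolding VS_def VL_def e4 using sum_tri_weight_diff[OF assms(2)] .
  have m1: "Vsharp (Suc L) k (replicate r 1) / (2*real L + 1)^2 = b (Suc L) / c"
    using e3[of "Suc L"] assms unfolding c_def by (simp add: add.commute)
  have m2: "Vsharp L k (replicate r 1) / (2*real L - 1)^2 = b L / c"
    using e3[of L] assms unfolding c_def by simp
  have "VS / c - VL / c = b (Suc L) / c + b L / c"
    by (metis d diff_divide_distrib add_divide_distrib)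
  then show ?thesis unfolding e1 e2 m1 m2 VS_def[symmetric] VL_def[symmetric] c_def[symmetric] .
qed

lemma conv_kernel_rec_solved:
  assumes "1 \<le> k" "k \<le> L"
  shows "conv_kernel (Suc c) (Suc L) k
      = ((2*real L+1) * conv_kernel c (Suc L) k
      - (2*real L-1)*(2*real L+1)/(8*real L) * conv_kernel c L k
        - (2*real L-1)^2*(2*real L+1)/(8*real L) * conv_kernel (Suc c) L k) / (2*real L+1)^2"
proof -
  define pL where "pL = 2*real L + 1"
  have p0: "pL \<noteq> 0" unfolding pL_def by (smt (verit) of_nat_0_le_iff)
  have R: "pL^2 * conv_kernel (Suc c) (Suc L) k
      + (2*real L-1)^2*pL/(8*real L) * conv_kernel (Suc c) L k
       = pL * conv_kernel c (Suc L) k - (2*real L-1)*pL/(8*real L) * conv_kernel c L k"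
    using conv_kernel_rec[OF assms] unfolding pL_def .
  show ?thesis unfolding pL_def[symmetric] using R p0 by (simp add: field_simps)
qed

definition conv_kernel_formula :: "nat \<Rightarrow> nat \<Rightarrow> nat \<Rightarrow> real" where
  "conv_kernel_formula r K k
      = central_coeff K / central_coeff k * (-1)^(K-k) * Vsharp K k (replicate r 1)
      / (2*real K - 1)^3"

lemma conv_kernel_formula_diag: "conv_kernel_formula r k k = 1 / (2*real k - 1)^(r+3)" if "1 \<le> k"
  unfolding conv_kernel_formula_def Vsharp_ones_diag using central_coeff_pos[OF that] by (simp add: power_add field_simps)

lemma conv_kernel_three:
  assumes "1 \<le> k" "k \<le> K"
  shows "conv_kernel 3 K k = conv_kernel_formula 0 K k"
  using assms(2)
proof (induction K rule: dec_induct)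
  case base
  then show ?case using conv_kernel_formula_diag[OF assms(1), of 0] conv_kernel_diag[of 3 k] by simp
next
  case (step L)
  have L1: "1 \<le> L" using step.hyps assms by simp
  define pL where "pL = 2*real L + 1"
  define mL where "mL = 2*real L - 1"
  define l where "l = real L"
  define nL where "nL = central_coeff L"
  define nk where "nk = central_coeff k"
  define c where "c = 2*real k - 1"
  define e where "e = ((-1)::real)^(L-k)"
  have nz: "pL \<noteq> 0" "mL \<noteq> 0" "l \<noteq> 0" "nk \<noteq> 0" "nL \<noteq> 0" "c \<noteq> 0"
    unfolding pL_def mL_def l_def nk_def nL_def c_def using L1 assms central_coeff_pos[OF assms(1)] central_coeff_pos[OF L1] by auto
  have X: "conv_kernel 3 (Suc L) k
      = (pL * conv_kernel 2 (Suc L) k - mL*pL/(8*l) * conv_kernel 2 L k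
      - mL^2*pL/(8*l) * conv_kernel 3 L k) / pL^2"
    using conv_kernel_rec_solved[OF assms(1) step.hyps(1), of 2] unfolding pL_def mL_def l_def by (simp add: numeral_3_eq_3)
  have z: "conv_kernel 2 (Suc L) k = 0"
    using conv_kernel_two_off_diag[of k "Suc L"] assms step.hyps by simp
  have cc_Suc: "central_coeff (Suc L) = nL * pL / (8*l)" unfolding nL_def pL_def l_def
    using central_coeff_Suc[OF L1] by simp
  have eS: "((-1)::real)^(Suc L - k) = - e" unfolding e_def
    using step.hyps by (simp add: Suc_diff_le)
  have pS: "2*real (Suc L) - 1 = pL" unfolding pL_def by simp
  have triS: "tri (Suc L) k = 1" using step.hyps by (simp add: tri_def)
  have CS: "conv_kernel_formula 0 (Suc L) k = nL * pL / (8*l) / nk * (- e) * (2 * (pL / c)) / pL^3"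
    unfolding conv_kernel_formula_def cc_Suc eS pS Vsharp_Nil replicate_0 triS nk_def[symmetric] c_def[symmetric] by simp
  have IH: "conv_kernel 3 L k = conv_kernel_formula 0 L k" using step.IH by simp
  show ?case
  proof (cases "L = k")
    case True
    have a: "conv_kernel 2 L k = 1/mL^2" "conv_kernel_formula 0 L k = 1/mL^3" "nL = nk" "e
        = 1" "c = mL"
      using True conv_kernel_diag[of 2 k] conv_kernel_formula_diag[OF assms(1), of 0]
      unfolding mL_def nL_def nk_def e_def c_def by auto
    show ?thesis unfolding X z step.IH CS a using nz by (simp add: field_simps power2_eq_square power3_eq_cube)
  next
    case False
    have a: "conv_kernel 2 L k = 0"
      using conv_kernel_two_off_diag[of k L] False step.hyps assms by simp
    have b: "conv_kernel_formula 0 L k = nL / nk * e * (2 * (mL / c)) / mL^3"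
      using False step.hyps unfolding conv_kernel_formula_def Vsharp_Nil replicate_0 nL_def nk_def e_def mL_def c_def
      by (simp add: tri_def)
    show ?thesis unfolding X z step.IH CS a b using nz by (simp add: field_simps power2_eq_square power3_eq_cube)
  qed
qed

lemma conv_kernel_ge_three:
  assumes "1 \<le> k"
  shows "k \<le> K \<Longrightarrow> conv_kernel (r+3) K k = conv_kernel_formula r K k"
proof (induction r arbitrary: K)
  case 0
  then show ?case using conv_kernel_three[OF assms] by simp
next
  case (Suc r)
  show ?case using Suc.prems
  proof (induction K rule: dec_induct)
    case base
    then show ?case using conv_kernel_formula_diag[OF assms, of "Suc r"] conv_kernel_diag[of "Suc r
        + 3" k] by simp
  next
    case (step L)
    have L1: "1 \<le> L" using step.hyps assms by simp
    define pL where "pL = 2*real L + 1"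
    define mL where "mL = 2*real L - 1"
    define l where "l = real L"
    define nL where "nL = central_coeff L"
    define nk where "nk = central_coeff k"
    define e where "e = ((-1)::real)^(L-k)"
    define VrS where "VrS = Vsharp (Suc L) k (replicate r 1)"
    define VrL where "VrL = Vsharp L k (replicate r 1)"
    define V1S where "V1S = Vsharp (Suc L) k (replicate (Suc r) 1)"
    define V1L where "V1L = Vsharp L k (replicate (Suc r) 1)"
    have nz: "pL \<noteq> 0" "mL \<noteq> 0" "l \<noteq> 0" "nk \<noteq> 0" "nL \<noteq> 0"
      unfolding pL_def mL_def l_def nk_def nL_def using L1 assms central_coeff_pos[OF assms] central_coeff_pos[OF L1] by auto
    have X: "conv_kernel (Suc r + 3) (Suc L) k
        = (pL * conv_kernel (r+3) (Suc L) k - mL*pL/(8*l) * conv_kernel (r+3) L k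
        - mL^2*pL/(8*l) * conv_kernel (Suc r + 3) L k) / pL^2"
      using conv_kernel_rec_solved[OF assms step.hyps(1), of "r+3"] unfolding pL_def mL_def l_def by simp
    have cc_Suc: "central_coeff (Suc L) = nL * pL / (8*l)" unfolding nL_def pL_def l_def
      using central_coeff_Suc[OF L1] by simp
    have eS: "((-1)::real)^(Suc L - k) = - e" unfolding e_def
      using step.hyps by (simp add: Suc_diff_le)
    have pS: "2*real (Suc L) - 1 = pL" unfolding pL_def by simp
    have c1: "conv_kernel (r+3) (Suc L) k = nL * pL / (8*l) / nk * (- e) * VrS / pL^3"
      using Suc.IH[of "Suc L"] step.hyps unfolding conv_kernel_formula_def cc_Suc eS pS nk_def[symmetric] VrS_def by simp
    have c2: "conv_kernel (r+3) L k = nL / nk * e * VrL / mL^3"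
      using Suc.IH[of L] step.hyps unfolding conv_kernel_formula_def nL_def nk_def e_def VrL_def mL_def by simp
    have c3: "conv_kernel (Suc r + 3) L k = nL / nk * e * V1L / mL^3"
      using step.IH unfolding conv_kernel_formula_def nL_def nk_def e_def V1L_def mL_def by simp
    have CS: "conv_kernel_formula (Suc r) (Suc L) k = nL * pL / (8*l) / nk * (- e) * V1S / pL^3"
      unfolding conv_kernel_formula_def cc_Suc eS pS nk_def[symmetric] V1S_def by simp
    have VRi: "V1S / pL - V1L / mL = VrS / pL^2 + VrL / mL^2"
      using Vsharp_ones_rec[OF assms step.hyps(1), of r] unfolding V1S_def V1L_def VrS_def VrL_def pL_def mL_def .
    define K0 where "K0 = nL * pL / (8*l*nk) * (- e)"
    have "pL^2 * conv_kernel (Suc r + 3) (Suc L) k = K0 * (VrS / pL^2 + VrL / mL^2 + V1L / mL)"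
      unfolding X c1 c2 c3 K0_def using nz by (simp add: field_simps power2_eq_square power3_eq_cube)
    also have "VrS / pL^2 + VrL / mL^2 + V1L / mL = V1S / pL" using VRi by simp
    also have "K0 * (V1S / pL) = pL^2 * conv_kernel_formula (Suc r) (Suc L) k"
      unfolding CS K0_def using nz by (simp add: field_simps power2_eq_square power3_eq_cube)
    finally show ?case using nz by simp
  qed
qed

lemma neg_one_power_diff: "k \<le> K \<Longrightarrow> ((-1)::real)^(K-k) = (-1)^K * (-1)^k"
proof -
  assume "k \<le> K"
  then have "((-1)::real)^K = (-1)^(K-k) * (-1)^k" by (simp add: power_add[symmetric])
  then have "((-1)::real)^K * (-1)^k = (-1)^(K-k) * ((-1)^k * (-1)^k)" by (simp add: mult.assoc)
  also have "((-1)::real)^k * (-1)^k = 1" by (simp add: power_add[symmetric] flip: mult_2)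
  finally show ?thesis by simp
qed

(* conv_kernel c K k splits into a factor depending on K and one depending on k
   (conv_kernel_closed_form), so that the kernels along a chain can be regrouped level by level. *)
definition kernel_upper :: "nat \<Rightarrow> nat \<Rightarrow> real" where
  "kernel_upper c K =
    (if c = 0 then (-1)^K / (2*real K - 1)
     else if c = 1 then 1 / (2*real K - 1)^2
     else (-1)^K / (2*real K - 1)^3)"

definition kernel_lower :: "nat \<Rightarrow> nat \<Rightarrow> real" where
  "kernel_lower c k = (if c = 1 then 2*real k - 1 else (-1)^k)"

lemma conv_kernel_closed_form:
  assumes "1 \<le> c" "c \<noteq> 2" "1 \<le> k" "k \<le> K"
  shows "conv_kernel c K k =
    central_coeff K / central_coeff k * Vsharp K k (replicate (c - 3) 1) * kernel_upper c K * kernel_lower c k"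
proof (cases "c = 1")
  case True
  have K0: "2*real K - 1 \<noteq> 0" "2*real k - 1 \<noteq> 0" using assms by auto
  show ?thesis
  proof (cases "K = k")
    case True
    then show ?thesis using \<open>c = 1\<close> conv_kernel_one[OF assms(3) assms(4)] K0
      by (simp add: Vsharp_Nil kernel_upper_def kernel_lower_def tri_def power2_eq_square)
  next
    case False
    define X where "X = 2*real K - 1"
    define Y where "Y = 2*real k - 1"
    have XY: "X \<noteq> 0" "Y \<noteq> 0" "central_coeff k \<noteq> 0"
      using K0 central_coeff_pos[OF assms(3)] unfolding X_def Y_def by auto
    have "central_coeff K / central_coeff k * 2 / X
        = central_coeff K / central_coeff k * (2 * (X / Y)) * (1 / X^2) * Y"
      using XY by (simp add: field_simps power2_eq_square)
    then show ?thesis using \<open>c = 1\<close> conv_kernel_one[OF assms(3) assms(4)] False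
      unfolding X_def Y_def by (simp add: Vsharp_Nil kernel_upper_def kernel_lower_def tri_def)
  qed
next
  case False
  then have c3: "c = (c - 3) + 3" "c \<noteq> 0" "c \<noteq> 1" using assms by auto
  have "conv_kernel c K k = conv_kernel_formula (c-3) K k"
    using conv_kernel_ge_three[OF assms(3) assms(4), of "c-3"] c3(1) by simp
  then show ?thesis unfolding conv_kernel_formula_def kernel_upper_def kernel_lower_def using c3 neg_one_power_diff[OF assms(4)]
    by (simp add: field_simps)
qed

section \<open>Generating functions of t-star sums\<close>

fun hom_sum :: "nat \<Rightarrow> nat \<Rightarrow> nat \<Rightarrow> real" where
  "hom_sum 0 lo hi = 1"
| "hom_sum (Suc a) lo hi = (\<Sum>k\<in>{lo..hi}. hom_sum a lo k / odd_sq k)"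

lemma tstar_replicate_two_append_Cons:
  "tstar M (replicate a 2 @ (cc # s)) = (\<Sum>m\<in>{1..M}. hom_sum a m M * tstar m s / (2*real m - 1)^cc)"
proof (induction a arbitrary: M)
  case 0
  then show ?case by simp
next
  case (Suc a)
  have "tstar M (replicate (Suc a) 2 @ (cc # s))
      = (\<Sum>k\<in>{1..M}. tstar k (replicate a 2 @ (cc # s)) / odd_sq k)"
    by (simp add: odd_sq_def)
  also have "\<dots>
      = (\<Sum>k\<in>{1..M}. \<Sum>m\<in>{1..k}. hom_sum a m k / odd_sq k
      * (tstar m s / (2*real m - 1)^cc))"
    unfolding Suc.IH by (simp add: sum_divide_distrib mult.commute)
  also have "\<dots>
      = (\<Sum>m\<in>{1..M}. \<Sum>k\<in>{m..M}. hom_sum a m k / odd_sq k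
      * (tstar m s / (2*real m - 1)^cc))"
    by (rule sum_triangle_swap)
  also have "\<dots>
      = (\<Sum>m\<in>{1..M}. (\<Sum>k\<in>{m..M}. hom_sum a m k / odd_sq k)
      * (tstar m s / (2*real m - 1)^cc))"
    by (simp only: sum_distrib_right)
  also have "\<dots> = (\<Sum>m\<in>{1..M}. hom_sum (Suc a) m M * tstar m s / (2*real m - 1)^cc)"
    by simp
  finally show ?case .
qed

lemma tstar_replicate_two: "tstar M (replicate a 2) = hom_sum a 1 M"
proof (induction a arbitrary: M)
  case 0 then show ?case by simp
next
  case (Suc a) then show ?case by (simp add: odd_sq_def)
qed

lemma hom_sum_Suc_Suc:
  "lo \<le> Suc hi \<Longrightarrow>
    hom_sum (Suc b) lo (Suc hi) = hom_sum (Suc b) lo hi + hom_sum b lo (Suc hi) / odd_sq (Suc hi)"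
  by (simp add: sum.nat_ivl_Suc' add.commute)

lemma hom_sum_Suc_hi:
  "lo \<le> Suc hi \<Longrightarrow> hom_sum b lo (Suc hi) = (\<Sum>i\<le>b. hom_sum i lo hi * (1 / odd_sq (Suc hi))^(b-i))"
proof (induction b)
  case 0 then show ?case by simp
next
  case (Suc b)
  have "hom_sum (Suc b) lo (Suc hi)
      = hom_sum (Suc b) lo hi
      + (1 / odd_sq (Suc hi)) * (\<Sum>i\<le>b. hom_sum i lo hi * (1 / odd_sq (Suc hi))^(b-i))"
    using hom_sum_Suc_Suc[OF Suc.prems] Suc by simp
  also have "(1 / odd_sq (Suc hi)) * (\<Sum>i\<le>b. hom_sum i lo hi * (1 / odd_sq (Suc hi))^(b-i))
      = (\<Sum>i\<le>b. hom_sum i lo hi * (1 / odd_sq (Suc hi))^(Suc b-i))"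
    unfolding sum_distrib_left by (rule sum.cong) (auto simp: Suc_diff_le)
  finally show ?case by (simp add: add.commute)
qed

lemma hom_sum_empty: "hi < lo \<Longrightarrow> hom_sum b lo hi = (if b = 0 then 1 else 0)"
  by (cases b) auto

lemma hom_sum_gf_sums:
  fixes w :: complex
  assumes "1 \<le> lo" "norm w < 1"
  shows "summable (\<lambda>b. norm (of_real (hom_sum b lo hi) * w ^ b)) \<and>
    (\<lambda>b. of_real (hom_sum b lo hi) * w ^ b) sums block_prod w lo hi"
proof (induction hi)
  have empty: "summable (\<lambda>b. norm (of_real (hom_sum b lo hi) * w ^ b)) \<and>
      (\<lambda>b. of_real (hom_sum b lo hi) * w ^ b) sums block_prod w lo hi" if "hi < lo" for hi
  proof -
    have terms: "of_real (hom_sum b lo hi) * w ^ b = (if b = 0 then 1 else 0)" for b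
      using that by (simp add: hom_sum_empty)
    have "summable (\<lambda>b. norm (if b = (0::nat) then 1 else (0::complex)))"
      by (rule summable_finite[of "{0}"]) auto
    moreover have "(\<lambda>b. if b = (0::nat) then 1 else (0::complex)) sums 1"
      using sums_single[of 0 "\<lambda>_. 1::complex"] by simp
    moreover have "block_prod w lo hi = 1"
      using that by (simp add: block_prod_def)
    ultimately show ?thesis
      unfolding terms by simp
  qed
  {
    case 0
    show ?case using empty assms(1) by simp
  next
    case (Suc hi)
    show ?case
    proof (cases "lo \<le> Suc hi")
      case False
      then show ?thesis using empty by simp
    next
      case True
      define X where "X = complex_of_real (odd_sq (Suc hi))"
      have X: "X \<noteq> 0" "X - w \<noteq> 0"
        using odd_sq_ge_one[of "Suc hi"] odd_sq_neq_small[of "Suc hi" w] assms(2) by (auto simp: X_def)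
      have small: "norm (w / X) < 1"
        using odd_sq_ge_one[of "Suc hi"] assms(2) by (simp add: X_def norm_divide divide_less_eq)
      have terms: "of_real (hom_sum b lo (Suc hi)) * w ^ b =
          (\<Sum>i\<le>b. (of_real (hom_sum i lo hi) * w ^ i) * (w / X) ^ (b - i))" for b
      proof -
        have "w ^ b = w ^ i * w ^ (b - i)" if "i \<le> b" for i
          using that by (simp add: power_add[symmetric])
        then show ?thesis
          unfolding hom_sum_Suc_hi[OF True] of_real_sum sum_distrib_right
          by (intro sum.cong) (simp_all add: X_def power_divide field_simps)
      qed
      have "block_prod w lo hi / (1 - w / X) = block_prod w lo (Suc hi)"
        using block_prod_Suc[OF True, of w] X by (simp add: X_def field_simps)
      then show ?thesis
        unfolding terms
        using Cauchy_product_geometric_sums[OF conjunct1[OF Suc.IH] conjunct2[OF Suc.IH] small] by simp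
    qed
  }
qed

lemma has_sum_hom_sum_gf:
  fixes w :: complex
  assumes "1 \<le> lo" "norm w < 1"
  shows "((\<lambda>b. of_real (hom_sum b lo hi) * w^b) has_sum block_prod w lo hi) UNIV"
  using hom_sum_gf_sums[OF assms] by (intro norm_summable_imp_has_sum) auto

fun tidx_from :: "(nat \<Rightarrow> nat) \<Rightarrow> nat \<Rightarrow> nat list \<Rightarrow> nat list" where
  "tidx_from c j [] = []"
| "tidx_from c j [b] = replicate b 2"
| "tidx_from c j (b # b' # bs) = replicate b 2 @ c (Suc j) # tidx_from c (Suc j) (b' # bs)"

lemma tidx_from_eq_concat:
  "length a = Suc r \<Longrightarrow>
    replicate (a!0) 2 @ concat (map (\<lambda>i. c (j+i) # replicate (a!i) 2) [1..<Suc r]) = tidx_from c j a"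
proof (induction r arbitrary: a j)
  case 0
  then obtain b where "a = [b]" by (metis length_0_conv length_Suc_conv)
  then show ?case by simp
next
  case (Suc r)
  then obtain b a' where a: "a = b # a'" "length a' = Suc r" by (metis length_Suc_conv)
  then obtain b' a'' where a': "a' = b' # a''" by (metis length_Suc_conv)
  have u: "[1..<Suc (Suc r)] = 1 # map Suc [1..<Suc r]"
    by (simp add: upt_conv_Cons map_Suc_upt)
  have "concat (map (\<lambda>i. c (j+i) # replicate (a!i) 2) [1..<Suc (Suc r)])
      = c (Suc j) # replicate (a'!0) 2 @ concat (map (\<lambda>i. c (Suc j
          + i) # replicate (a'!i) 2) [1..<Suc r])"
    unfolding u using a by (simp add: comp_def del: upt_Suc)
  also have "\<dots> = c (Suc j) # tidx_from c (Suc j) a'"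
  proof -
    have ih: "replicate (a'!0) 2 @ concat (map (\<lambda>i. c (Suc j
        + i) # replicate (a'!i) 2) [1..<Suc r]) = tidx_from c (Suc j) a'"
      by (rule Suc.IH[OF a(2)])
    show ?thesis unfolding ih ..
  qed
  finally show ?case using a a' by simp
qed

lemma tidx_eq_tidx_from: "length a = Suc d \<Longrightarrow> tidx d c a = tidx_from c 0 a"
  unfolding tidx_def using tidx_from_eq_concat[of a d c 0] by simp

fun zpow_weight :: "(nat \<Rightarrow> complex) \<Rightarrow> nat \<Rightarrow> nat list \<Rightarrow> complex" where
  "zpow_weight z j [] = 1"
| "zpow_weight z j (b # bs) = z j ^ (2*b) * zpow_weight z (Suc j) bs"

lemma zpow_weight_eq_prod: "zpow_weight z j a = (\<Prod>i<length a. z (j+i) ^ (2*(a!i)))"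
proof (induction a arbitrary: j)
  case Nil then show ?case by simp
next
  case (Cons b a)
  then show ?case by (simp del: prod.lessThan_Suc add: prod.lessThan_Suc_shift)
qed

(* The generating function in z_j, ..., z_(j+r) of the t*_M over the indices tidx_from c j a
   (has_sum_gen_fun): the block {2}^a_j between c_(j+1) at position m and M contributes block_prod. *)
fun gen_fun :: "(nat \<Rightarrow> nat) \<Rightarrow> (nat \<Rightarrow> complex) \<Rightarrow> nat \<Rightarrow> nat \<Rightarrow> nat \<Rightarrow> complex" where
  "gen_fun c z j 0 M = block_prod (z j ^ 2) 1 M"
| "gen_fun c z j (Suc r) M =
    (\<Sum>m\<in>{1..M}. block_prod (z j ^ 2) m M * of_real (1/(2*real m - 1)^(c (Suc j))) * gen_fun c z (Suc j) r m)"

definition gf_term :: "(nat \<Rightarrow> nat) \<Rightarrow> (nat \<Rightarrow> complex) \<Rightarrow> nat \<Rightarrow> nat \<Rightarrow> nat list \<Rightarrow> complex" where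
  "gf_term c z j M bs = of_real (tstar M (tidx_from c j bs)) * zpow_weight z j bs"

lemma gf_term_single: "gf_term c z j M [b] = of_real (hom_sum b 1 M) * (z j ^ 2) ^ b"
  by (simp add: gf_term_def tstar_replicate_two power_mult)

lemma gf_term_Cons:
  assumes "bs \<noteq> []"
  shows "gf_term c z j M (b # bs) =
    (\<Sum>m\<in>{1..M}. (of_real (hom_sum b m M) * (z j ^ 2) ^ b) *
       (of_real (1 / (2 * real m - 1) ^ c (Suc j)) * gf_term c z (Suc j) m bs))"
proof -
  obtain b' bs' where bs: "bs = b' # bs'" using assms by (cases bs) auto
  have tstar_eq: "tstar M (tidx_from c j (b # bs)) =
      (\<Sum>m\<in>{1..M}. hom_sum b m M * tstar m (tidx_from c (Suc j) bs)
          / (2 * real m - 1) ^ c (Suc j))"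
    by (simp add: bs tstar_replicate_two_append_Cons)
  have "z j ^ (2 * b) = (z j ^ 2) ^ b" by (simp add: power_mult)
  then show ?thesis
    unfolding gf_term_def zpow_weight.simps tstar_eq of_real_sum sum_distrib_right
    by (simp only: of_real_mult of_real_divide of_real_1 divide_inverse mult_1_left mult_ac)
qed

lemma has_sum_gen_fun:
  assumes "\<forall>i. j \<le> i \<and> i \<le> j + r \<longrightarrow> norm (z i) < 1"
  shows "(gf_term c z j M has_sum gen_fun c z j r M) {bs. length bs = Suc r}"
  using assms
proof (induction r arbitrary: j M)
  case 0
  have small: "norm (z j ^ 2) < 1" using 0 by (simp add: norm_power power_less_one_iff)
  have singletons: "{bs. length bs = Suc 0} = (\<lambda>b. [b]) ` UNIV"
    by (auto simp: length_Suc_conv)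
  have inj: "inj (\<lambda>b. [b])" by (simp add: inj_on_def)
  have "((gf_term c z j M \<circ> (\<lambda>b. [b])) has_sum gen_fun c z j 0 M) UNIV"
    using has_sum_hom_sum_gf[OF le_refl small] by (simp add: comp_def gf_term_single)
  then show ?case
    unfolding singletons has_sum_reindex[OF inj] .
next
  case (Suc r)
  have small: "norm (z j ^ 2) < 1" using Suc.prems by (simp add: norm_power power_less_one_iff)
  let ?B = "{bs :: nat list. length bs = Suc r}"
  have IH: "(gf_term c z (Suc j) m has_sum gen_fun c z (Suc j) r m) ?B" for m
    using Suc.IH[of "Suc j"] Suc.prems by simp
  let ?T = "\<lambda>m (b, bs). (of_real (hom_sum b m M) * (z j ^ 2) ^ b) *
    (of_real (1 / (2 * real m - 1) ^ c (Suc j)) * gf_term c z (Suc j) m bs)"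
  have "(?T m has_sum block_prod (z j ^ 2) m M *
      (of_real (1 / (2 * real m - 1) ^ c (Suc j)) * gen_fun c z (Suc j) r m)) (UNIV \<times> ?B)"
    if "1 \<le> m" for m
    by (rule has_sum_mult_Times[OF has_sum_hom_sum_gf[OF that small] has_sum_cmult_right[OF IH]])
  then have "((\<lambda>p. \<Sum>m\<in>{1..M}. ?T m p) has_sum gen_fun c z j (Suc r) M) (UNIV \<times> ?B)"
    unfolding gen_fun.simps mult.assoc by (intro has_sum_sum) auto
  then have "((\<lambda>(b, bs). gf_term c z j M (b # bs)) has_sum gen_fun c z j (Suc r) M) (UNIV \<times> ?B)"
    by (rule has_sum_cong[THEN iffD1, rotated]) (auto simp: gf_term_Cons length_Suc_conv)
  moreover have "{bs. length bs = Suc (Suc r)} = (\<lambda>(b, bs). b # bs) ` (UNIV \<times> ?B)"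
    by (auto simp: length_Suc_conv)
  moreover have "inj_on (\<lambda>(b, bs). b # bs) (UNIV \<times> ?B)" by (simp add: inj_on_def)
  ultimately show ?case
    by (simp add: has_sum_reindex comp_def case_prod_beta')
qed

section \<open>Partial-fraction expansion of the generating function\<close>

(* Expanding every block_prod of gen_fun in partial fractions and summing first over the positions
   of the c's leaves, for each outermost pole k, the sum pf_expansion c (pole_factor z) j r k. *)
fun pf_expansion :: "(nat \<Rightarrow> nat) \<Rightarrow> (nat \<Rightarrow> nat \<Rightarrow> complex) \<Rightarrow> nat \<Rightarrow> nat \<Rightarrow> nat \<Rightarrow> complex" where
  "pf_expansion c Q j 0 k = Q j k * of_real (coeff_below 1 k)"
| "pf_expansion c Q j (Suc r) k =
    Q j k * (\<Sum>k'\<in>{1..k}. of_real (conv_kernel (c (Suc j)) k k') * pf_expansion c Q (Suc j) r k')"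

definition pole_factor :: "(nat \<Rightarrow> complex) \<Rightarrow> nat \<Rightarrow> nat \<Rightarrow> complex" where
  "pole_factor z j k = of_real (odd_sq k) / (of_real (odd_sq k) - z j ^ 2)"

lemma gen_fun_eq_pf_expansion:
  assumes "\<forall>i. j \<le> i \<and> i \<le> j + r \<longrightarrow> norm (z i) < 1" "1 \<le> M"
  shows "gen_fun c z j r M
      = (\<Sum>k\<in>{1..M}. of_real (coeff_above M k) * pf_expansion c (pole_factor z) j r k)"
  using assms
proof (induction r arbitrary: j M)
  case 0
  have nw: "norm (z j ^ 2) < 1" using 0 by (simp add: norm_power power_less_one_iff)
  have "gen_fun c z j 0 M = block_prod (z j ^ 2) 1 M" by simp
  also have "\<dots>
      = (\<Sum>k\<in>{1..M}. of_real (coeff_above M k * coeff_below 1 k)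
      * (of_real (odd_sq k) / (of_real (odd_sq k) - z j ^ 2)))"
    by (rule block_prod_partial_fractions[OF le_refl 0(2) small_notin_odd_sq_image[OF le_refl nw]])
  also have "\<dots>
      = (\<Sum>k\<in>{1..M}. of_real (coeff_above M k) * pf_expansion c (pole_factor z) j 0 k)"
    by (rule sum.cong) (auto simp: pole_factor_def)
  finally show ?case .
next
  case (Suc r)
  have nw: "norm (z j ^ 2) < 1" using Suc.prems by (simp add: norm_power power_less_one_iff)
  define P where "P k = pole_factor z j k" for k
  define Y where "Y m = (of_real (1/(2*real m - 1)^(c (Suc j))) :: complex)" for m
  define E where "E k' = pf_expansion c (pole_factor z) (Suc j) r k'" for k'
  have IH: "gen_fun c z (Suc j) r m
      = (\<Sum>k'\<in>{1..m}. of_real (coeff_above m k') * E k')" if "1 \<le> m" for m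
    using Suc.IH[of "Suc j" m] Suc.prems that unfolding E_def by simp
  have B: "block_prod (z j ^ 2) m M
      = (\<Sum>k\<in>{m..M}. of_real (coeff_above M k * coeff_below m k)
      * P k)" if "m \<in> {1..M}" for m
    using that block_prod_partial_fractions[of m M] small_notin_odd_sq_image[OF _ nw]
    unfolding P_def pole_factor_def by auto
  have "gen_fun c z j (Suc r) M =
      (\<Sum>m\<in>{1..M}. (\<Sum>k\<in>{m..M}. of_real (coeff_above M k * coeff_below m k) * P k * Y m) *
        (\<Sum>k'\<in>{1..m}. of_real (coeff_above m k') * E k'))"
    unfolding gen_fun.simps by (intro sum.cong refl) (simp add: B IH Y_def sum_distrib_right sum_divide_distrib)
  also have "\<dots> = (\<Sum>k\<in>{1..M}. \<Sum>k'\<in>{1..k}. \<Sum>m\<in>{k'..k}.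
      of_real (coeff_above M k * coeff_below m k) * P k * Y m * (of_real (coeff_above m k') * E k'))"
    by (rule sum_nested_triangles)
  also have "\<dots> = (\<Sum>k\<in>{1..M}. of_real (coeff_above M k) * pf_expansion c (pole_factor z) j (Suc r) k)"
  proof (intro sum.cong refl)
    fix k
    have "of_real (conv_kernel (c (Suc j)) k k') =
        (\<Sum>m\<in>{k'..k}. of_real (coeff_below m k) * Y m * of_real (coeff_above m k') :: complex)" for k'
      unfolding conv_kernel_def Y_def of_real_sum by (intro sum.cong refl) simp
    then show "(\<Sum>k'\<in>{1..k}. \<Sum>m\<in>{k'..k}. of_real (coeff_above M k * coeff_below m k) * P k * Y m *
        (of_real (coeff_above m k') * E k')) = of_real (coeff_above M k) * pf_expansion c (pole_factor z) j (Suc r) k"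
      by (simp add: P_def E_def sum_distrib_left sum_distrib_right mult_ac)
  qed
  finally show ?case .
qed

lemma pf_expansion_cong:
  "(\<forall>i\<ge>j. Q1 i = Q2 i) \<Longrightarrow> pf_expansion c Q1 j r k = pf_expansion c Q2 j r k"
proof (induction r arbitrary: j k)
  case 0 then show ?case by simp
next
  case (Suc r)
  have "pf_expansion c Q1 (Suc j) r k' = pf_expansion c Q2 (Suc j) r k'" for k' using Suc by simp
  then show ?case using Suc.prems by simp
qed

lemma pf_expansion_diff:
  assumes "\<forall>i. i \<noteq> u \<longrightarrow> Q1 i = Q2 i"
  shows "j \<le> u \<Longrightarrow> u \<le> j + r \<Longrightarrow>
    pf_expansion c Q1 j r k - pf_expansion c Q2 j r k
        = pf_expansion c (\<lambda>i k. if i = u then Q1 i k - Q2 i k else Q1 i k) j r k"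
proof (induction r arbitrary: j k)
  case 0
  then have "j = u" by simp
  then show ?case by (simp add: algebra_simps)
next
  case (Suc r)
  define Qd where "Qd = (\<lambda>i k. if i = u then Q1 i k - Q2 i k else Q1 i k)"
  show ?case
  proof (cases "j = u")
    case True
    have e1: "pf_expansion c Q2 (Suc j) r k' = pf_expansion c Q1 (Suc j) r k'" for k'
      by (rule pf_expansion_cong) (use assms True in auto)
    have e2: "pf_expansion c Qd (Suc j) r k' = pf_expansion c Q1 (Suc j) r k'" for k'
      by (rule pf_expansion_cong) (use True in \<open>auto simp: Qd_def\<close>)
    have q3: "Qd j k = Q1 j k - Q2 j k" using True unfolding Qd_def by simp
    show ?thesis unfolding Qd_def[symmetric] pf_expansion.simps e1 e2 q3
      by (simp add: algebra_simps)
  next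
    case False
    then have ju: "Suc j \<le> u" "u \<le> Suc j + r" using Suc.prems by auto
    have q: "Q2 j k = Q1 j k" "Qd j k = Q1 j k" using assms False unfolding Qd_def by auto
    have "pf_expansion c Q1 (Suc j) r k' - pf_expansion c Q2 (Suc j) r k'
        = pf_expansion c Qd (Suc j) r k'" for k'
      using Suc.IH[OF ju] unfolding Qd_def .
    then have "(\<Sum>k'\<in>{1..k}. of_real (conv_kernel (c (Suc j)) k k')
        * pf_expansion c Q1 (Suc j) r k')
        - (\<Sum>k'\<in>{1..k}. of_real (conv_kernel (c (Suc j)) k k')
        * pf_expansion c Q2 (Suc j) r k')
      = (\<Sum>k'\<in>{1..k}. of_real (conv_kernel (c (Suc j)) k k')
          * pf_expansion c Qd (Suc j) r k')"
      by (simp add: sum_subtractf[symmetric] algebra_simps)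
    then show ?thesis unfolding Qd_def[symmetric] pf_expansion.simps q
      by (simp add: algebra_simps)
  qed
qed

section \<open>Nested sums over chains\<close>

definition chain_weight :: "nat \<Rightarrow> (nat \<Rightarrow> nat) \<Rightarrow> (nat \<Rightarrow> nat \<Rightarrow> complex) \<Rightarrow> nat \<Rightarrow> nat \<Rightarrow> nat \<Rightarrow> complex" where
  "chain_weight d c Q i kp k =
    of_real (kernel_lower (c i) k * kernel_upper (cext d c (Suc i)) k * Vsharp kp k (replicate (c i - 3) 1))
      * Q i k"

lemma cext_in: "1 \<le> i \<Longrightarrow> i \<le> d \<Longrightarrow> cext d c i = c i"
  unfolding cext_def by simp

fun nested_sum :: "(nat \<Rightarrow> nat \<Rightarrow> nat \<Rightarrow> complex) \<Rightarrow> nat \<Rightarrow> nat \<Rightarrow> nat \<Rightarrow> nat \<Rightarrow> complex" where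
  "nested_sum W j 0 kp M = (\<Sum>k\<in>{1..M}. W j kp k)"
| "nested_sum W j (Suc r) kp M = (\<Sum>k\<in>{1..M}. W j kp k * nested_sum W (Suc j) r k k)"

fun chain_tail :: "(nat \<Rightarrow> nat \<Rightarrow> nat \<Rightarrow> complex) \<Rightarrow> nat \<Rightarrow> nat \<Rightarrow> nat \<Rightarrow> complex" where
  "chain_tail W j 0 k = 1"
| "chain_tail W j (Suc r) k = nested_sum W (Suc j) r k k"

lemma nested_sum_eq: "nested_sum W j r kp M = (\<Sum>k\<in>{1..M}. W j kp k * chain_tail W j r k)"
  by (cases r) simp_all

lemma nested_sum_cong:
  "(\<forall>i\<ge>j. W1 i = W2 i) \<Longrightarrow> nested_sum W1 j r kp M = nested_sum W2 j r kp M"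
proof (induction r arbitrary: j kp M)
  case 0 then show ?case by simp
next
  case (Suc r)
  have "nested_sum W1 (Suc j) r k k = nested_sum W2 (Suc j) r k k" for k using Suc by simp
  then show ?case using Suc.prems by simp
qed

lemma chain_tail_cong:
  "(\<forall>i>j. W1 i = W2 i) \<Longrightarrow> chain_tail W1 j r k = chain_tail W2 j r k"
  by (cases r) (auto intro!: nested_sum_cong)

lemma pf_expansion_eq_chain_tail:
  assumes cond: "\<forall>i\<in>{1..d}. 1 \<le> c i \<and> c i \<noteq> 2"
  shows "j + r = d \<Longrightarrow> 1 \<le> k \<Longrightarrow>
    pf_expansion c Q j r k =
      of_real (central_coeff k) * (-2) * of_real (kernel_upper (cext d c (Suc j)) k) * Q j k
      * chain_tail (chain_weight d c Q) j r k"
proof (induction r arbitrary: j k)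
  case 0
  then have jd: "j = d" by simp
  have "cext d c (Suc j) = 0" unfolding cext_def jd by simp
  then show ?case using coeff_below_one[OF 0(2)] by (simp add: kernel_upper_def mult_ac)
next
  case (Suc r)
  define cj where "cj = c (Suc j)"
  have cj: "1 \<le> cj" "cj \<noteq> 2" using cond Suc.prems unfolding cj_def by auto
  have cx: "cext d c (Suc j) = cj" unfolding cj_def using Suc.prems by (simp add: cext_in)
  have IH: "pf_expansion c Q (Suc j) r k'
      = of_real (central_coeff k') * (-2) * of_real (kernel_upper (cext d c (Suc (Suc j))) k')
      * Q (Suc j) k' * chain_tail (chain_weight d c Q) (Suc j) r k'"
    if "1 \<le> k'" for k' using Suc.IH[of "Suc j" k'] Suc.prems that by simp
  have "(\<Sum>k'\<in>{1..k}. of_real (conv_kernel cj k k') * pf_expansion c Q (Suc j) r k')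
      = (\<Sum>k'\<in>{1..k}. of_real (central_coeff k) * (-2) * of_real (kernel_upper cj k)
          * (chain_weight d c Q (Suc j) k k' * chain_tail (chain_weight d c Q) (Suc j) r k'))"
  proof (rule sum.cong[OF refl])
    fix k' assume k': "k' \<in> {1..k}"
    then have k1: "1 \<le> k'" "k' \<le> k" by auto
    have N0: "complex_of_real (central_coeff k') \<noteq> 0"
      using central_coeff_pos[OF k1(1)] by simp
    define R where "R = chain_tail (chain_weight d c Q) (Suc j) r k'"
    define V where "V = Vsharp k k' (replicate (cj - 3) 1)"
    have "of_real (conv_kernel cj k k') * pf_expansion c Q (Suc j) r k'
        = of_real (central_coeff k) / of_real (central_coeff k') * of_real V
            * of_real (kernel_upper cj k) * of_real (kernel_lower cj k') *
          (of_real (central_coeff k') * (-2) * of_real (kernel_upper (cext d c (Suc (Suc j))) k')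
              * Q (Suc j) k' * R)"
      unfolding conv_kernel_closed_form[OF cj k1(1) k1(2)] IH[OF k1(1)] R_def V_def by simp
    \<comment> \<open>the \<open>central_coeff k'\<close> of the kernel cancels against the next level\<close>
    also have "\<dots> = of_real (central_coeff k) * (-2) * of_real (kernel_upper cj k) *
          (of_real (kernel_lower cj k' * kernel_upper (cext d c (Suc (Suc j))) k' * V)
              * Q (Suc j) k' * R)"
      using N0 by (simp add: field_simps)
    finally show "of_real (conv_kernel cj k k') * pf_expansion c Q (Suc j) r k' =
        of_real (central_coeff k) * (-2) * of_real (kernel_upper cj k)
            * (chain_weight d c Q (Suc j) k k' * chain_tail (chain_weight d c Q) (Suc j) r k')"
      unfolding chain_weight_def R_def V_def cj_def by (simp add: mult_ac)
  qed
  also have "\<dots>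
      = of_real (central_coeff k) * (-2) * of_real (kernel_upper cj k)
      * chain_tail (chain_weight d c Q) j (Suc r) k"
    unfolding sum_distrib_left[symmetric] chain_tail.simps nested_sum_eq[of _ "Suc j"] ..
  finally show ?case unfolding pf_expansion.simps cx cj_def[symmetric] by (simp add: mult_ac)
qed

(* Level 0 also carries coeff_above n k from gen_fun_eq_pf_expansion, rewritten by coeff_above_binomial. *)
definition top_weight :: "nat \<Rightarrow> nat \<Rightarrow> (nat \<Rightarrow> nat) \<Rightarrow> (nat \<Rightarrow> nat \<Rightarrow> complex) \<Rightarrow> nat \<Rightarrow> nat \<Rightarrow> nat \<Rightarrow> complex" where
  "top_weight n d c Q i kp k =
    (if i = 0 then of_nat ((2*n-1) choose (n-k)) * (-2) * of_real (kernel_upper (cext d c 1) k) * Q 0 k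
     else chain_weight d c Q i kp k)"

lemma sum_pf_expansion_eq_nested_sum:
  assumes cond: "\<forall>i\<in>{1..d}. 1 \<le> c i \<and> c i \<noteq> 2"
  shows "(\<Sum>k\<in>{1..n}. of_real (coeff_above n k) * pf_expansion c Q 0 d k)
      = of_real (central_coeff n) * nested_sum (top_weight n d c Q) 0 d 0 n"
proof -
  have RR: "chain_tail (top_weight n d c Q) 0 d k = chain_tail (chain_weight d c Q) 0 d k" for k
    by (rule chain_tail_cong) (auto simp: top_weight_def fun_eq_iff)
  have "(\<Sum>k\<in>{1..n}. of_real (coeff_above n k) * pf_expansion c Q 0 d k)
      = (\<Sum>k\<in>{1..n}. of_real (central_coeff n)
      * (top_weight n d c Q 0 0 k * chain_tail (top_weight n d c Q) 0 d k))"
  proof (rule sum.cong[OF refl])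
    fix k assume k: "k \<in> {1..n}"
    then have k1: "1 \<le> k" "k \<le> n" by auto
    have N0: "complex_of_real (central_coeff k) \<noteq> 0"
      using central_coeff_pos[OF k1(1)] by simp
    have "of_real (coeff_above n k) * pf_expansion c Q 0 d k
        = of_nat ((2*n-1) choose (n-k)) * of_real (central_coeff n) / of_real (central_coeff k) *
         (of_real (central_coeff k) * (-2) * of_real (kernel_upper (cext d c (Suc 0)) k) * Q 0 k
             * chain_tail (chain_weight d c Q) 0 d k)"
      unfolding coeff_above_binomial[OF k1] pf_expansion_eq_chain_tail[OF cond, of 0 d, OF _ k1(1), simplified] by simp
    also have "\<dots>
        = of_real (central_coeff n)
        * (top_weight n d c Q 0 0 k * chain_tail (top_weight n d c Q) 0 d k)"
      unfolding RR top_weight_def using N0 by (simp add: field_simps)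
    finally show "of_real (coeff_above n k) * pf_expansion c Q 0 d k
        = of_real (central_coeff n)
        * (top_weight n d c Q 0 0 k * chain_tail (top_weight n d c Q) 0 d k)" .
  qed
  also have "\<dots> = of_real (central_coeff n) * nested_sum (top_weight n d c Q) 0 d 0 n"
    unfolding sum_distrib_left[symmetric] nested_sum_eq[of _ 0] ..
  finally show ?thesis .
qed

lemma chains_nth_antimono:
  assumes "ks \<in> chains M r" "i \<le> j" "j \<le> r"
  shows "ks ! j \<le> ks ! i"
  using assms(2,3)
proof (induction j rule: dec_induct)
  case base
  then show ?case by simp
next
  case (step j)
  then have "ks ! Suc j \<le> ks ! j" using assms(1) unfolding chains_def by auto
  with step show ?case by simp
qed

lemma chains_ge_one: "ks \<in> chains M r \<Longrightarrow> i \<le> r \<Longrightarrow> 1 \<le> ks ! i"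
  using chains_nth_antimono[of ks M r i r] unfolding chains_def by auto

lemma chains_0: "chains M 0 = (\<lambda>k. [k]) ` {1..M}"
proof (intro set_eqI iffI)
  fix ks assume "ks \<in> chains M 0"
  then obtain k where "ks = [k]" "1 \<le> k" "k \<le> M" unfolding chains_def
    by (auto simp: length_Suc_conv)
  then show "ks \<in> (\<lambda>k. [k]) ` {1..M}" by auto
next
  fix ks assume "ks \<in> (\<lambda>k. [k]) ` {1..M}"
  then show "ks \<in> chains M 0" unfolding chains_def by auto
qed

lemma chains_Suc: "chains M (Suc r) = (\<lambda>(k,ks). k # ks) ` (SIGMA k:{1..M}. chains k r)"
proof (intro set_eqI iffI)
  fix ks assume ks: "ks \<in> chains M (Suc r)"
  then obtain k ks' where e: "ks = k # ks'" "length ks' = Suc r" unfolding chains_def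
    by (auto simp: length_Suc_conv)
  have k1: "1 \<le> k" using chains_ge_one[OF ks, of 0] e by simp
  have kM: "k \<le> M" using ks e unfolding chains_def by simp
  have "ks' \<in> chains k r"
  proof -
    have "ks'!0 \<le> k" using ks e unfolding chains_def by force
    moreover have "1 \<le> ks'!r" using ks e unfolding chains_def by simp
    moreover have "\<forall>i<r. ks'!Suc i \<le> ks'!i"
    proof (intro allI impI)
      fix i assume "i < r"
      then have "ks!Suc (Suc i) \<le> ks!Suc i" using ks unfolding chains_def by auto
      then show "ks'!Suc i \<le> ks'!i" using e by simp
    qed
    ultimately show ?thesis using e unfolding chains_def by simp
  qed
  then show "ks \<in> (\<lambda>(k,ks). k # ks) ` (SIGMA k:{1..M}. chains k r)" using e k1 kM by force
next
  fix ks assume "ks \<in> (\<lambda>(k,ks). k # ks) ` (SIGMA k:{1..M}. chains k r)"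
  then obtain k ks' where e: "ks = k # ks'" "k \<in> {1..M}" "ks' \<in> chains k r" by auto
  have "\<forall>i<Suc r. ks!Suc i \<le> ks!i"
  proof (intro allI impI)
    fix i assume i: "i < Suc r"
    show "ks!Suc i \<le> ks!i"
    proof (cases i)
      case 0 then show ?thesis using e unfolding chains_def by simp
    next
      case (Suc i') then show ?thesis using e i unfolding chains_def by simp
    qed
  qed
  then show "ks \<in> chains M (Suc r)" using e unfolding chains_def by simp
qed

lemma finite_chains: "finite (chains M r)"
proof (induction r arbitrary: M)
  case 0 then show ?case unfolding chains_0 by simp
next
  case (Suc r) then show ?case unfolding chains_Suc by (intro finite_imageI finite_SigmaI) auto
qed

lemma sum_chains_prod:
  "(\<Sum>ks\<in>chains M r. \<Prod>i\<le>r. W (j+i) (if i = 0 then kp else ks!(i-1)) (ks!i))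
      = nested_sum W j r kp M"
proof (induction r arbitrary: j kp M)
  case 0
  have inj: "inj_on (\<lambda>k. [k]) {1..M}" by (simp add: inj_on_def)
  show ?case unfolding chains_0 sum.reindex[OF inj] by simp
next
  case (Suc r)
  have inj: "inj_on (\<lambda>(k,ks). k # ks) (SIGMA k:{1..M}. chains k r)"
    by (simp add: inj_on_def)
  have sig: "(\<Sum>k\<in>{1..M}. \<Sum>ks\<in>chains k r. g k ks)
      = (\<Sum>(k,ks)\<in>(SIGMA k:{1..M}. chains k r). g k ks)" for g :: "nat \<Rightarrow> nat list \<Rightarrow> complex"
    by (rule sum.Sigma) (auto simp: finite_chains)
  have "(\<Sum>ks\<in>chains M (Suc r). \<Prod>i\<le>Suc r. W (j+i) (if i
      = 0 then kp else ks!(i-1)) (ks!i))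
      = (\<Sum>(k,ks)\<in>(SIGMA k:{1..M}. chains k r). \<Prod>i\<le>Suc r. W (j+i) (if i
          = 0 then kp else (k#ks)!(i-1)) ((k#ks)!i))"
    unfolding chains_Suc sum.reindex[OF inj] by (simp add: case_prod_unfold)
  also have "\<dots>
      = (\<Sum>k\<in>{1..M}. \<Sum>ks\<in>chains k r. W j kp k
      * (\<Prod>i\<le>r. W (Suc j+i) (if i = 0 then k else ks!(i-1)) (ks!i)))"
    unfolding sig
    by (rule sum.cong[OF refl]) (auto simp: prod.atMost_Suc_shift nth_Cons' simp del: prod.atMost_Suc)
  also have "\<dots> = nested_sum W j (Suc r) kp M"
    unfolding nested_sum.simps sum_distrib_left[symmetric] Suc.IH ..
  finally show ?case .
qed

section \<open>The terms with positive exponent at position u\<close>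

definition pole_factor_diff :: "(nat \<Rightarrow> complex) \<Rightarrow> nat \<Rightarrow> nat \<Rightarrow> nat \<Rightarrow> complex" where
  "pole_factor_diff z u i k =
    (if i = u then pole_factor z u k - pole_factor (z(u := 0)) u k else pole_factor z i k)"

lemma odd_sq_complex:
  assumes "1 \<le> k" "norm (w::complex) < 1"
  shows "(2 * of_nat k - 1 :: complex) \<noteq> 0" "(2 * of_nat k - 1)^2 - w \<noteq> 0"
    "complex_of_real (odd_sq k) = (2 * of_nat k - 1)^2"
proof -
  show x: "complex_of_real (odd_sq k) = (2 * of_nat k - 1)^2" unfolding odd_sq_def by simp
  have "2*real k - 1 \<noteq> 0" using assms by simp
  then have a: "complex_of_real (2*real k - 1) \<noteq> 0"
    by (simp only: of_real_eq_0_iff not_False_eq_True)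
  have b: "complex_of_real (2*real k - 1) = 2 * of_nat k - 1" by simp
  show "(2 * of_nat k - 1 :: complex) \<noteq> 0" using a unfolding b .
  show "(2 * of_nat k - 1)^2 - w \<noteq> 0" using odd_sq_neq_small[OF assms] unfolding x by simp
qed

lemma delta_ge_three: "3 \<le> c \<Longrightarrow> delta c = 0"
proof -
  assume "3 \<le> c"
  then have c: "c = Suc (Suc (Suc (c - 3)))" by simp
  show ?thesis by (subst c) simp
qed

lemma kernel_factors_prod:
  fixes k ci cj :: nat
  assumes k1: "1 \<le> k" and ci: "ci = 1 \<or> 3 \<le> ci" and cj: "cj = 0 \<or> cj = 1 \<or> 3 \<le> cj"
  shows "complex_of_real (kernel_lower ci k * kernel_upper cj k)
      = (-1)^(k * (delta ci + delta cj)) * (2 * of_nat k - 1) powi (int (delta ci + delta cj) - 1)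
      / (2 * of_nat k - 1)^2"
proof -
  define X where "X = (2 * of_nat k - 1 :: complex)"
  define s where "s = ((-1)::complex)^k"
  have rX: "complex_of_real (2*real k - 1) = X" unfolding X_def by simp
  have "2*real k - 1 \<noteq> 0" using k1 by simp
  then have X0: "X \<noteq> 0" by (metis rX of_real_eq_0_iff)
  have s2: "s * s = 1" unfolding s_def by (simp add: power_add[symmetric] flip: mult_2)
  have sp: "((-1)::complex)^(k * m) = s^m" for m unfolding s_def by (simp add: power_mult)
  have sr: "complex_of_real ((-1)^k) = s" unfolding s_def by simp
  have lower: "complex_of_real (kernel_lower ci k) = (if ci = 1 then X else s)"
    unfolding kernel_lower_def by (simp add: X_def s_def)
  have upper: "complex_of_real (kernel_upper cj k)
      = (if cj = 0 then s / X else if cj = 1 then 1 / X^2 else s / X^3)"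
    unfolding kernel_upper_def by (simp add: X_def s_def)
  have dci: "delta ci = (if ci = 1 then 1 else 0)" using ci delta_ge_three by auto
  have dcj: "delta cj = (if cj = 0 then 2 else if cj = 1 then 1 else 0)"
    using cj delta_ge_three by auto
  have main: "(if ci = 1 then X else s)
      * (if cj = 0 then s / X else if cj = 1 then 1 / X^2 else s / X^3)
     = s ^ (delta ci + delta cj) * X powi (int (delta ci + delta cj) - 1) / X^2"
    using ci cj X0 s2 unfolding dci dcj
    by (auto simp: power_int_minus field_simps power2_eq_square power3_eq_cube eval_nat_numeral)
  show ?thesis unfolding of_real_mult lower upper sp X_def[symmetric] using main by simp
qed

lemma pole_factor_diff_eq:
  assumes "1 \<le> k" "norm (z i) < 1" "norm (z u) < 1"
  shows "pole_factor_diff z u i k =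
    (if i = u then z u^2 / ((2 * of_nat k - 1)^2 - z u^2)
     else (2 * of_nat k - 1)^2 / ((2 * of_nat k - 1)^2 - z i^2))"
proof (cases "i = u")
  case True
  define X2 where "X2 = (2* of_nat k - 1 :: complex)^2"
  have nw: "norm (z u ^ 2) < 1" using assms by (simp add: norm_power power_less_one_iff)
  have f: "X2 \<noteq> 0" "X2 - z u^2 \<noteq> 0" "complex_of_real (odd_sq k) = X2"
    using odd_sq_complex[OF assms(1) nw] unfolding X2_def by auto
  have "pole_factor_diff z u i k = X2 / (X2 - z u^2) - X2 / (X2 - 0)"
    unfolding pole_factor_diff_def pole_factor_def f(3) using True by simp
  also have "\<dots> = z u^2 / (X2 - z u^2)" using f by (simp add: field_simps)
  finally show ?thesis unfolding X2_def using True by simp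
next
  case False
  then show ?thesis unfolding pole_factor_diff_def pole_factor_def odd_sq_def by simp
qed

lemma cext_Suc_cases:
  assumes "\<forall>i\<in>{1..d}. 1 \<le> c i \<and> c i \<noteq> 2" "i \<le> d"
  shows "cext d c (Suc i) = 0 \<or> cext d c (Suc i) = 1 \<or> 3 \<le> cext d c (Suc i)"
proof (cases "i = d")
  case False
  then have "1 \<le> c (Suc i)" "c (Suc i) \<noteq> 2" using assms by auto
  then show ?thesis unfolding cext_def by auto
qed (simp add: cext_def)

lemma top_weight_top_eq:
  assumes cond: "\<forall>i\<in>{1..d}. 1 \<le> c i \<and> c i \<noteq> 2"
    and "1 \<le> k" "norm (z 0) < 1" "norm (z u) < 1"
  shows "top_weight n d c (pole_factor_diff z u) 0 0 k =
    of_nat ((2*n-1) choose (n-k)) * (if 0 = u then z u^2 / (2 * of_nat k - 1)^2 else 1) *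
    ((-1)^(k * deltas d c 0) * (2 * of_nat k - 1) powi (int (deltas d c 0) - 1)
        / ((2 * of_nat k - 1)^2 - z 0^2) * of_real (Vsharp 0 k (replicate (cext d c 0 - 3) 1)))"
proof -
  define X where "X = (2 * of_nat k - 1 :: complex)"
  define w where "w = z 0 ^ 2"
  define P where "P = (-1)^(k * deltas d c 0) * X powi (int (deltas d c 0) - 1)"
  have "norm w < 1" unfolding w_def using assms(3) by (simp add: norm_power power_less_one_iff)
  then have X0: "X \<noteq> 0" "X^2 - w \<noteq> 0"
    using odd_sq_complex[OF assms(2)] unfolding X_def by auto
  have "deltas d c 0 = delta 1 + delta (cext d c 1)"
    unfolding deltas_def cext_def by simp
  then have "complex_of_real (kernel_lower 1 k * kernel_upper (cext d c 1) k) = P / X^2"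
    using kernel_factors_prod[of k 1 "cext d c 1"] assms(2) cext_Suc_cases[OF cond, of 0]
    unfolding P_def X_def by simp
  moreover have "complex_of_real (kernel_lower 1 k) = X"
    unfolding kernel_lower_def X_def by simp
  ultimately have upper: "complex_of_real (kernel_upper (cext d c 1) k) = P / X^3"
    using X0 by (simp add: field_simps power2_eq_square power3_eq_cube)
  have V: "complex_of_real (Vsharp 0 k []) = - 2 / X"
    using assms(2) unfolding Vsharp_Nil tri_def X_def by simp
  have Q: "pole_factor_diff z u 0 k = (if 0 = u then w / (X^2 - w) else X^2 / (X^2 - w))"
    using pole_factor_diff_eq[OF assms(2-4)] unfolding X_def w_def by auto
  define C where "C = (of_nat ((2*n-1) choose (n-k)) :: complex)"
  have "top_weight n d c (pole_factor_diff z u) 0 0 k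
      = C * (-2) * (P / X^3) * (if 0 = u then w / (X^2 - w) else X^2 / (X^2 - w))"
    unfolding top_weight_def upper C_def Q by simp
  also have "\<dots> = C * (if 0 = u then w / X^2 else 1) * (P / (X^2 - w) * (- 2 / X))"
    using X0 by (auto simp: field_simps power2_eq_square power3_eq_cube)
  finally show ?thesis
    unfolding V[symmetric] P_def C_def X_def[symmetric] w_def[symmetric]
    by (simp add: cext_def w_def)
qed

lemma top_weight_inner_eq:
  assumes cond: "\<forall>i\<in>{1..d}. 1 \<le> c i \<and> c i \<noteq> 2"
    and "1 \<le> i" "i \<le> d" "1 \<le> k" "norm (z i) < 1" "norm (z u) < 1"
  shows "top_weight n d c (pole_factor_diff z u) i kp k =
    (if i = u then z u^2 / (2 * of_nat k - 1)^2 else 1) *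
    ((-1)^(k * deltas d c i) * (2 * of_nat k - 1) powi (int (deltas d c i) - 1)
        / ((2 * of_nat k - 1)^2 - z i^2) * of_real (Vsharp kp k (replicate (cext d c i - 3) 1)))"
proof -
  define X where "X = (2 * of_nat k - 1 :: complex)"
  define w where "w = z i ^ 2"
  define P where "P = (-1)^(k * deltas d c i) * X powi (int (deltas d c i) - 1)"
  have "norm w < 1" unfolding w_def using assms(5) by (simp add: norm_power power_less_one_iff)
  then have X0: "X \<noteq> 0" "X^2 - w \<noteq> 0"
    using odd_sq_complex[OF assms(4)] unfolding X_def by auto
  have ci: "c i = 1 \<or> 3 \<le> c i" using cond assms(2,3) by force
  have cx: "cext d c i = c i" using cext_in[OF assms(2,3)] .
  then have "deltas d c i = delta (c i) + delta (cext d c (Suc i))" unfolding deltas_def by simp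
  then have sl: "complex_of_real (kernel_lower (c i) k * kernel_upper (cext d c (Suc i)) k) = P / X^2"
    using kernel_factors_prod[OF assms(4) ci cext_Suc_cases[OF cond assms(3)]] unfolding P_def X_def by simp
  have Q: "pole_factor_diff z u i k = (if i = u then w / (X^2 - w) else X^2 / (X^2 - w))"
    using pole_factor_diff_eq[OF assms(4-6)] unfolding X_def w_def by auto
  define V where "V = complex_of_real (Vsharp kp k (replicate (c i - 3) 1))"
  have "top_weight n d c (pole_factor_diff z u) i kp k
      = P / X^2 * V * (if i = u then w / (X^2 - w) else X^2 / (X^2 - w))"
    unfolding top_weight_def chain_weight_def using assms(2) Q sl unfolding V_def by (simp add: of_real_mult)
  also have "\<dots> = (if i = u then w / X^2 else 1) * (P / (X^2 - w) * V)"
    using X0 by (auto simp: field_simps power2_eq_square)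
  finally show ?thesis
    unfolding cx P_def V_def X_def[symmetric] w_def[symmetric] by (simp add: w_def)
qed

lemma prod_top_weight_eq:
  assumes cond: "\<forall>i\<in>{1..d}. 1 \<le> c i \<and> c i \<noteq> 2" and "u \<le> d"
    and small: "\<forall>i\<le>d. norm (z i) < 1" and ks: "ks \<in> chains n d"
  shows "(\<Prod>i\<le>d. top_weight n d c (pole_factor_diff z u) i (kprev ks i) (ks ! i)) =
    z u ^ 2 * (of_nat ((2 * n - 1) choose (n - ks ! 0)) / (2 * of_nat (ks ! u) - 1) ^ 2 *
         (\<Prod>i\<le>d. (- 1) ^ (ks ! i * deltas d c i)
                    * (2 * of_nat (ks ! i) - 1) powi (int (deltas d c i) - 1)
                    / ((2 * of_nat (ks ! i) - 1) ^ 2 - z i ^ 2)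
                    * complex_of_real (Vsharp (kprev ks i) (ks ! i) (replicate (cext d c i - 3) 1))))"
proof -
  define F where "F i = (- 1) ^ (ks ! i * deltas d c i)
      * (2 * of_nat (ks ! i) - 1) powi (int (deltas d c i) - 1) / ((2 * of_nat (ks ! i) - 1) ^ 2 - z i ^ 2)
      * complex_of_real (Vsharp (kprev ks i) (ks ! i) (replicate (cext d c i - 3) 1))" for i
  have "top_weight n d c (pole_factor_diff z u) i (kprev ks i) (ks ! i) =
      (if i = 0 then of_nat ((2*n-1) choose (n - ks ! i)) else 1)
        * (if i = u then z u^2 / (2 * of_nat (ks ! i) - 1)^2 else 1) * F i"
    if "i \<in> {..d}" for i
  proof (cases "i = 0")
    case True
    then show ?thesis
      using top_weight_top_eq[OF cond chains_ge_one[OF ks, of 0], where z = z and u = u and n = n]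
        small \<open>u \<le> d\<close>
      by (simp add: F_def kprev_def)
  next
    case False
    then show ?thesis
      using top_weight_inner_eq[OF cond _ _ chains_ge_one[OF ks], where i = i and z = z and u = u
          and n = n and kp = "kprev ks i"] small that \<open>u \<le> d\<close>
      by (simp add: F_def)
  qed
  then have "(\<Prod>i\<le>d. top_weight n d c (pole_factor_diff z u) i (kprev ks i) (ks ! i)) =
      (\<Prod>i\<le>d. (if i = 0 then of_nat ((2*n-1) choose (n - ks ! i)) else 1)) *
      (\<Prod>i\<le>d. (if i = u then z u^2 / (2 * of_nat (ks ! i) - 1)^2 else 1)) * (\<Prod>i\<le>d. F i)"
    unfolding prod.distrib[symmetric] by (rule prod.cong[OF refl])
  also have "\<dots> = of_nat ((2*n-1) choose (n - ks ! 0)) * (z u^2 / (2 * of_nat (ks ! u) - 1)^2)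
      * (\<Prod>i\<le>d. F i)"
    using \<open>u \<le> d\<close> by (simp add: prod.delta)
  finally show ?thesis unfolding F_def by (simp add: mult_ac)
qed

(* Setting z_u to 0 removes exactly the terms with a_u > 0. *)
lemma has_sum_gen_fun_diff:
  assumes small: "\<forall>i\<le>d. norm (z i) < 1" and "u \<le> d"
  shows "((\<lambda>a. of_real (tstar n (tidx d c a)) * (\<Prod>i\<le>d. z i ^ (2 * (a ! i)))) has_sum
      (gen_fun c z 0 d n - gen_fun c (z(u := 0)) 0 d n)) {a. length a = Suc d \<and> a ! u \<ge> 1}"
proof -
  define f where "f (z' :: nat \<Rightarrow> complex) (a :: nat list)
      = of_real (tstar n (tidx d c a)) * (\<Prod>i\<le>d. z' i ^ (2 * (a ! i)))" for z' a
  have gf: "(f z' has_sum gen_fun c z' 0 d n) {a. length a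
      = Suc d}" if "\<forall>i\<le>d. norm (z' i) < 1" for z'
  proof -
    have "(gf_term c z' 0 n has_sum gen_fun c z' 0 d n) {a. length a = Suc d}"
      using has_sum_gen_fun[of 0 d z'] that by simp
    then show ?thesis
      by (rule has_sum_cong[THEN iffD1, rotated])
        (simp add: f_def gf_term_def tidx_eq_tidx_from zpow_weight_eq_prod lessThan_Suc_atMost)
  qed
  have "(f (z(u := 0)) has_sum gen_fun c (z(u := 0)) 0 d n) {a. length a = Suc d}"
    using gf small by simp
  then have "(f z has_sum gen_fun c (z(u := 0)) 0 d n) {a. length a = Suc d \<and> a ! u = 0}"
  proof (rule has_sum_cong_neutral[THEN iffD1, rotated -1])
    fix a :: "nat list"
    assume "a \<in> {a. length a = Suc d} - {a. length a = Suc d \<and> a ! u = 0}"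
    then show "f (z(u := 0)) a = 0"
      using \<open>u \<le> d\<close> unfolding f_def by (auto intro!: prod_zero)
  next
    fix a :: "nat list"
    assume "a \<in> {a. length a = Suc d} \<inter> {a. length a = Suc d \<and> a ! u = 0}"
    then have "(z(u := 0)) i ^ (2 * (a ! i)) = z i ^ (2 * (a ! i))" for i
      by (cases "i = u") auto
    then show "f (z(u := 0)) a = f z a" unfolding f_def by simp
  qed auto
  from has_sum_Diff[OF gf[OF small] this] show ?thesis
    unfolding f_def by (rule back_subst[where P = "\<lambda>A. (_ has_sum _) A"]) auto
qed

lemma gen_fun_diff_eq:
  assumes "1 \<le> n" "\<forall>i\<in>{1..d}. 1 \<le> c i \<and> c i \<noteq> 2"
    and small: "\<forall>i\<le>d. norm (z i) < 1" and "u \<le> d"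
  shows "gen_fun c z 0 d n - gen_fun c (z(u := 0)) 0 d n =
    z u ^ 2 * of_real (central_coeff n) *
      (\<Sum>ks\<in>chains n d.
         of_nat ((2 * n - 1) choose (n - ks ! 0)) / (2 * of_nat (ks ! u) - 1) ^ 2 *
         (\<Prod>i\<le>d. (- 1) ^ (ks ! i * deltas d c i)
                    * (2 * of_nat (ks ! i) - 1) powi (int (deltas d c i) - 1)
                    / ((2 * of_nat (ks ! i) - 1) ^ 2 - z i ^ 2)
                    * complex_of_real (Vsharp (kprev ks i) (ks ! i) (replicate (cext d c i - 3) 1))))"
proof -
  let ?z' = "z(u := 0)"
  have small_z: "\<forall>i. 0 \<le> i \<and> i \<le> 0 + d \<longrightarrow> norm (z i) < 1"
    and small_z': "\<forall>i. 0 \<le> i \<and> i \<le> 0 + d \<longrightarrow> norm (?z' i) < 1"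
    using small by auto
  have diff: "pole_factor_diff z u =
      (\<lambda>i k. if i = u then pole_factor z i k - pole_factor ?z' i k else pole_factor z i k)"
    unfolding pole_factor_diff_def fun_eq_iff by auto
  have "\<forall>i. i \<noteq> u \<longrightarrow> pole_factor z i = pole_factor ?z' i"
    unfolding pole_factor_def fun_eq_iff by auto
  then have "pf_expansion c (pole_factor z) 0 d k - pf_expansion c (pole_factor ?z') 0 d k =
      pf_expansion c (pole_factor_diff z u) 0 d k" for k
    unfolding diff using pf_expansion_diff[of u _ _ 0 d c k] \<open>u \<le> d\<close> by simp
  then have "gen_fun c z 0 d n - gen_fun c ?z' 0 d n =
      (\<Sum>k\<in>{1..n}. of_real (coeff_above n k) * pf_expansion c (pole_factor_diff z u) 0 d k)"
    unfolding gen_fun_eq_pf_expansion[OF small_z assms(1)] gen_fun_eq_pf_expansion[OF small_z' assms(1)]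
    by (simp add: sum_subtractf[symmetric] right_diff_distrib[symmetric])
  also have "\<dots>
      = of_real (central_coeff n) * nested_sum (top_weight n d c (pole_factor_diff z u)) 0 d 0 n"
    by (rule sum_pf_expansion_eq_nested_sum[OF assms(2)])
  also have "\<dots> = of_real (central_coeff n) *
      (\<Sum>ks\<in>chains n d. \<Prod>i\<le>d. top_weight n d c (pole_factor_diff z u) i (kprev ks i) (ks ! i))"
    using sum_chains_prod[where M = n and r = d and j = 0 and kp = 0] by (simp add: kprev_def)
  finally show ?thesis
    using prod_top_weight_eq[OF assms(2) \<open>u \<le> d\<close> small]
    by (simp add: sum_distrib_left mult_ac cong: sum.cong)
qed

theorem corollary2p3:
  fixes n d u :: nat and c :: "nat \<Rightarrow> nat" and z :: "nat \<Rightarrow> complex"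
  assumes "n \<ge> 1"
    and "\<forall>i\<in>{1..d}. c i \<ge> 1 \<and> c i \<noteq> 2"
    and "\<forall>i\<le>d. norm (z i) < 1"
    and "u \<le> d"
  shows "((\<lambda>a. complex_of_real (tstar n (tidx d c a)) * (\<Prod>i\<le>d. z i ^ (2 * (a ! i))))
     has_sum
     (z u ^ 2 * complex_of_real (real n * real (2 * n choose n) / 2 ^ (4 * n - 2)) *
      (\<Sum>ks\<in>chains n d.
         of_nat ((2 * n - 1) choose (n - ks ! 0)) / (2 * of_nat (ks ! u) - 1) ^ 2 *
         (\<Prod>i\<le>d. (- 1) ^ (ks ! i * deltas d c i)
                    * (2 * of_nat (ks ! i) - 1) powi (int (deltas d c i) - 1)
                    / ((2 * of_nat (ks ! i) - 1) ^ 2 - z i ^ 2)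
                    * complex_of_real (Vsharp (kprev ks i) (ks ! i) (replicate (cext d c i - 3) 1))))))
     {a. length a = Suc d \<and> a ! u \<ge> 1}"
  using has_sum_gen_fun_diff[OF assms(3,4), of n c]
  unfolding gen_fun_diff_eq[OF assms] central_coeff_def .

end
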